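(* Let $d\ge2$, $\varphi\in L^1_{loc}(\mathbb{R}^d,dx)$ with $\varphi>0$ $dx$-a.e., $\mu:=\varphi\,dx$, and let $a_{ij}$, $1\le i,j\le d$, be measurable with $a_{ij}=a_{ji}$. Assume the bilinear form $$\mathcal{E}(f,g)=\sum_{i,j=1}^d\int_{\mathbb{R}^d}a_{ij}(x)\partial_if(x)\partial_jg(x)\,\mu(dx),\qquad f,g\in C_0^\infty(\mathbb{R}^d),$$ is well-defined, positive and closable on $L^2(\mathbb{R}^d,\mu)$, with closure $(\mathcal{E},D(\mathcal{E}))$. Suppose there exist a compact set $K\subset\mathbb{R}^d$ and a function $\phi$ on $[0,\infty)$ with $x\mapsto\phi(|x|)$ in $L^1_{loc}(\mathbb{R}^d\setminus K,dx)$ such that $$\|A(x)\|\varphi(x)\le\phi(|x|)\qquad\forall x\in\mathbb{R}^d\setminus K,$$ where $\|A(x)\|=\big(\sum_{i,j=1}^d a_{ij}(x)^2\big)^{1/2}$. Let $\rho>0$ be such that $K\subset B_\rho(0)$ and for $n>\rho$ set $$a_n:=\int_{\overline{B_n(0)}\setminus B_\rho(0)}\frac{|y|^{2-2d}}{\phi(|y|)}\,dy.$$ If $a_n<\infty$ for every $n>\rho$ and $a_n\to\infty$ as $n\to\infty$, then $(\mathcal{E},D(\mathcal{E}))$ is recurrent.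
   Context: $B_r(0)=\{x\in\mathbb{R}^d:|x|<r\}$ and $\overline{B_r(0)}=\{x:|x|\le r\}$, with $|\cdot|$ the Euclidean norm. A closed symmetric form $(\mathcal{E},D(\mathcal{E}))$ on $L^2(\mathbb{R}^d,\mu)$ is called recurrent if there exists $(u_n)_{n\in\mathbb{N}}\subset D(\mathcal{E})$ with $0\le u_n\le1$, $u_n\nearrow1$ $dx$-a.e. as $n\to\infty$, and $\lim_{n\to\infty}\mathcal{E}(u_n,u_n)=0$. *)

theory Defs
  imports "HOL-Analysis.Analysis"
begin

definition pd :: "'n::finite \<Rightarrow> (real^'n \<Rightarrow> real) \<Rightarrow> real^'n \<Rightarrow> real" where
  "pd i f = (\<lambda>x. frechet_derivative f (at x) (axis i 1))"

fun iter_pd :: "'n::finite list \<Rightarrow> (real^'n \<Rightarrow> real) \<Rightarrow> real^'n \<Rightarrow> real" where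
  "iter_pd [] f = f"
| "iter_pd (i # is) f = pd i (iter_pd is f)"

definition smooth_fun :: "(real^'n::finite \<Rightarrow> real) \<Rightarrow> bool" where
  "smooth_fun f \<longleftrightarrow> (\<forall>is x. iter_pd is f differentiable (at x))"

definition C0inf :: "(real^'n::finite \<Rightarrow> real) \<Rightarrow> bool" where
  "C0inf f \<longleftrightarrow> smooth_fun f \<and> compact (closure {x. f x \<noteq> 0})"

definition wmeasure :: "(real^'n::finite \<Rightarrow> real) \<Rightarrow> (real^'n) measure" where
  "wmeasure \<phi> = density lebesgue (\<lambda>x. ennreal (\<phi> x))"

definition Eform :: "('n::finite \<Rightarrow> 'n \<Rightarrow> real^'n \<Rightarrow> real) \<Rightarrow> (real^'n \<Rightarrow> real)
    \<Rightarrow> (real^'n \<Rightarrow> real) \<Rightarrow> (real^'n \<Rightarrow> real) \<Rightarrow> real" where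
  "Eform a \<phi> f g = (\<Sum>i\<in>UNIV. \<Sum>j\<in>UNIV.
      integral\<^sup>L (wmeasure \<phi>) (\<lambda>x. a i j x * pd i f x * pd j g x))"

definition form_well_defined :: "('n::finite \<Rightarrow> 'n \<Rightarrow> real^'n \<Rightarrow> real) \<Rightarrow> (real^'n \<Rightarrow> real) \<Rightarrow> bool" where
  "form_well_defined a \<phi> \<longleftrightarrow> (\<forall>f g i j. C0inf f \<longrightarrow> C0inf g \<longrightarrow>
      integrable (wmeasure \<phi>) (\<lambda>x. a i j x * pd i f x * pd j g x))"

definition form_positive :: "('n::finite \<Rightarrow> 'n \<Rightarrow> real^'n \<Rightarrow> real) \<Rightarrow> (real^'n \<Rightarrow> real) \<Rightarrow> bool" where
  "form_positive a \<phi> \<longleftrightarrow> (\<forall>f. C0inf f \<longrightarrow> Eform a \<phi> f f \<ge> 0)"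

definition L2_conv :: "(real^'n::finite) measure \<Rightarrow> (nat \<Rightarrow> real^'n \<Rightarrow> real) \<Rightarrow> (real^'n \<Rightarrow> real) \<Rightarrow> bool" where
  "L2_conv M f u \<longleftrightarrow> (\<lambda>k. \<integral>\<^sup>+ x. ennreal ((f k x - u x)\<^sup>2) \<partial>M) \<longlonglongrightarrow> 0"

text \<open>Cauchy sequence with respect to the form E (together with L^2 convergence: E_1-Cauchy).\<close>
definition E_cauchy :: "('n::finite \<Rightarrow> 'n \<Rightarrow> real^'n \<Rightarrow> real) \<Rightarrow> (real^'n \<Rightarrow> real) \<Rightarrow> (nat \<Rightarrow> real^'n \<Rightarrow> real) \<Rightarrow> bool" where
  "E_cauchy a \<phi> f \<longleftrightarrow> (\<forall>e>0. \<exists>N. \<forall>k\<ge>N. \<forall>l\<ge>N.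
      Eform a \<phi> (\<lambda>x. f k x - f l x) (\<lambda>x. f k x - f l x) < e)"

definition form_closable :: "('n::finite \<Rightarrow> 'n \<Rightarrow> real^'n \<Rightarrow> real) \<Rightarrow> (real^'n \<Rightarrow> real) \<Rightarrow> bool" where
  "form_closable a \<phi> \<longleftrightarrow> (\<forall>f. (\<forall>k. C0inf (f k)) \<longrightarrow> L2_conv (wmeasure \<phi>) f (\<lambda>_. 0)
      \<longrightarrow> E_cauchy a \<phi> f \<longrightarrow> (\<lambda>k. Eform a \<phi> (f k) (f k)) \<longlonglongrightarrow> 0)"

text \<open>Graph of the closure: u \<in> D(E) with closure value E(u,u) = c.
  (By closability, c is uniquely determined by u.)\<close>
definition closure_graph :: "('n::finite \<Rightarrow> 'n \<Rightarrow> real^'n \<Rightarrow> real) \<Rightarrow> (real^'n \<Rightarrow> real)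
    \<Rightarrow> (real^'n \<Rightarrow> real) \<Rightarrow> real \<Rightarrow> bool" where
  "closure_graph a \<phi> u c \<longleftrightarrow> u \<in> borel_measurable lebesgue \<and>
     (\<integral>\<^sup>+ x. ennreal ((u x)\<^sup>2) \<partial>wmeasure \<phi>) < \<infinity> \<and>
     (\<exists>f. (\<forall>k. C0inf (f k)) \<and> L2_conv (wmeasure \<phi>) f u \<and> E_cauchy a \<phi> f \<and>
          (\<lambda>k. Eform a \<phi> (f k) (f k)) \<longlonglongrightarrow> c)"

definition closure_recurrent :: "('n::finite \<Rightarrow> 'n \<Rightarrow> real^'n \<Rightarrow> real) \<Rightarrow> (real^'n \<Rightarrow> real) \<Rightarrow> bool" where
  "closure_recurrent a \<phi> \<longleftrightarrow> (\<exists>u c. (\<forall>n. closure_graph a \<phi> (u n) (c n)) \<and>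
     (\<forall>n. AE x in lebesgue. 0 \<le> u n x \<and> u n x \<le> 1) \<and>
     (AE x in lebesgue. incseq (\<lambda>n. u n x) \<and> (\<lambda>n. u n x) \<longlonglongrightarrow> 1) \<and>
     c \<longlonglongrightarrow> 0)"

definition matnorm :: "('n::finite \<Rightarrow> 'n \<Rightarrow> real^'n \<Rightarrow> real) \<Rightarrow> real^'n \<Rightarrow> real" where
  "matnorm a x = sqrt (\<Sum>i\<in>UNIV. \<Sum>j\<in>UNIV. (a i j x)\<^sup>2)"

text \<open>a_n, with the convention 1/0 = infinity.\<close>
definition a_seq :: "(real \<Rightarrow> real) \<Rightarrow> real \<Rightarrow> nat \<Rightarrow> ennreal" where
  "a_seq \<Phi> \<rho> n = (\<integral>\<^sup>+ y. indicator (cball (0::real^'n::finite) (real n) - ball 0 \<rho>) y *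
      (if \<Phi> (norm y) = 0 then \<infinity> else ennreal (norm y powr (2 - 2 * real CARD('n)) / \<Phi> (norm y))) \<partial>lebesgue)"

end

theory Submission
  imports Defs
begin

text \<open>
  Test the form on radial cutoffs \<open>u(x) = 1 - \<Psi>(|x|\<^sup>2) / \<Psi>(\<beta>)\<close>, where \<open>\<Psi>\<close> is a primitive
  of a smooth profile \<open>\<psi> \<ge> 0\<close> supported in \<open>[R\<^sup>2, \<beta>]\<close>. Cauchy-Schwarz for the matrix
  \<open>(a\<^sub>i\<^sub>j)\<close> together with \<open>\<parallel>A\<parallel>\<phi> \<le> \<Phi>\<close> bounds \<open>E(u,u)\<close> by a one-dimensional weighted energy of
  \<open>\<psi>\<close>, and the profile \<open>\<psi>(|x|\<^sup>2) \<sim> w(|x|) / (\<Phi>(|x|) |x|\<^sup>2)\<close>, with \<open>w(r) \<sim> r\<^sup>2\<^sup>-\<^sup>d\<close>, makes that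
  energy of order \<open>1 / (a\<^sub>N - a\<^sub>R\<^sub>+\<^sub>1)\<close>. As \<open>a\<^sub>n \<rightarrow> \<infinity>\<close>, cutoffs equal to \<open>1\<close> on arbitrarily large
  balls with arbitrarily small energy exist, and chaining them gives the sequence required for
  recurrence. The optimal profile is only measurable, so it is truncated and then approximated
  almost everywhere by smooth profiles, dominated convergence controlling both integrals.
\<close>

section \<open>Smooth functions of one real variable\<close>

definition deriv_closed :: "(real \<Rightarrow> real) set \<Rightarrow> bool" where
  "deriv_closed F \<longleftrightarrow> (\<forall>f\<in>F. \<exists>f'\<in>F. \<forall>x. (f has_real_derivative f' x) (at x))"

definition smooth_real :: "(real \<Rightarrow> real) \<Rightarrow> bool" where
  "smooth_real f \<longleftrightarrow> (\<exists>F. deriv_closed F \<and> f \<in> F)"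

lemma smooth_real_polynomial: "real_polynomial_function p \<Longrightarrow> smooth_real p"
  unfolding smooth_real_def
  by (rule exI[of _ "Collect real_polynomial_function"])
     (auto simp: deriv_closed_def dest: has_real_derivative_polynomial_function)

lemma smooth_real_const: "smooth_real (\<lambda>x. c)"
  by (rule smooth_real_polynomial) auto

lemma smooth_real_has_derivative:
  assumes "smooth_real f"
  obtains f' where "smooth_real f'" "\<And>x. (f has_real_derivative f' x) (at x)"
  using assms unfolding smooth_real_def deriv_closed_def by metis

lemma smooth_real_differentiable: "smooth_real f \<Longrightarrow> f differentiable (at x)"
  by (metis smooth_real_has_derivative real_differentiable_def)

lemma smooth_real_continuous_on: "smooth_real f \<Longrightarrow> continuous_on S f"
  by (meson continuous_at_imp_continuous_on differentiable_imp_continuous_within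
      smooth_real_differentiable)

lemma smooth_real_affine:
  assumes "smooth_real f" shows "smooth_real (\<lambda>x. f (\<alpha> * x + \<beta>))"
proof -
  obtain F where F: "deriv_closed F" "f \<in> F" using assms smooth_real_def by auto
  let ?G = "{\<lambda>x. c * g (\<alpha> * x + \<beta>) | g c. g \<in> F}"
  have "deriv_closed ?G" unfolding deriv_closed_def
  proof
    fix h assume "h \<in> ?G"
    then obtain g c where g: "g \<in> F" "h = (\<lambda>x. c * g (\<alpha> * x + \<beta>))" by auto
    then obtain g' where g': "g' \<in> F" "\<And>x. (g has_real_derivative g' x) (at x)"
      using F(1) deriv_closed_def by blast
    have "\<And>x. (h has_real_derivative (c * \<alpha>) * g' (\<alpha> * x + \<beta>)) (at x)"
      unfolding g(2) by (rule derivative_eq_intros DERIV_chain2[OF g'(2)] | simp)+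
    moreover have "(\<lambda>x. (c * \<alpha>) * g' (\<alpha> * x + \<beta>)) \<in> ?G" using g' by blast
    ultimately show "\<exists>f'\<in>?G. \<forall>x. (h has_real_derivative f' x) (at x)"
      by (intro bexI[of _ "\<lambda>x. (c * \<alpha>) * g' (\<alpha> * x + \<beta>)"]) auto
  qed
  moreover have "(\<lambda>x. f (\<alpha> * x + \<beta>)) \<in> ?G" using F by (auto intro!: exI[of _ f] exI[of _ 1])
  ultimately show ?thesis unfolding smooth_real_def by blast
qed

lemma smooth_real_cmult:
  assumes "smooth_real f" shows "smooth_real (\<lambda>x. c * f x)"
proof -
  obtain F where F: "deriv_closed F" "f \<in> F" using assms smooth_real_def by auto
  let ?G = "{\<lambda>x. c * g x | g. g \<in> F}"
  have "deriv_closed ?G" unfolding deriv_closed_def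
  proof
    fix h assume "h \<in> ?G"
    then obtain g where g: "g \<in> F" "h = (\<lambda>x. c * g x)" by auto
    then obtain g' where "g' \<in> F" "\<And>x. (g has_real_derivative g' x) (at x)"
      using F(1) deriv_closed_def by blast
    then show "\<exists>f'\<in>?G. \<forall>x. (h has_real_derivative f' x) (at x)"
      using g by (intro bexI[of _ "\<lambda>x. c * g' x"]) (auto intro!: derivative_eq_intros)
  qed
  then show ?thesis using F unfolding smooth_real_def by blast
qed

lemma smooth_real_add:
  assumes "smooth_real f" "smooth_real g" shows "smooth_real (\<lambda>x. f x + g x)"
proof -
  obtain F where F: "deriv_closed F" "f \<in> F" using assms smooth_real_def by auto
  obtain G where G: "deriv_closed G" "g \<in> G" using assms smooth_real_def by auto
  let ?H = "{\<lambda>x. f x + g x | f g. f \<in> F \<and> g \<in> G}"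
  have "deriv_closed ?H" unfolding deriv_closed_def
  proof
    fix h assume "h \<in> ?H"
    then obtain f1 g1 where fg: "f1 \<in> F" "g1 \<in> G" "h = (\<lambda>x. f1 x + g1 x)" by auto
    obtain f' where f': "f' \<in> F" "\<And>x. (f1 has_real_derivative f' x) (at x)"
      using F(1) fg deriv_closed_def by blast
    obtain g' where g': "g' \<in> G" "\<And>x. (g1 has_real_derivative g' x) (at x)"
      using G(1) fg deriv_closed_def by blast
    show "\<exists>f'\<in>?H. \<forall>x. (h has_real_derivative f' x) (at x)"
      using f' g' fg by (intro bexI[of _ "\<lambda>x. f' x + g' x"]) (auto intro!: derivative_eq_intros)
  qed
  then show ?thesis using F G unfolding smooth_real_def by blast
qed

inductive_set product_sums :: "(real \<Rightarrow> real) set \<Rightarrow> (real \<Rightarrow> real) set \<Rightarrow> (real \<Rightarrow> real) set"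
  for F G where
  "f \<in> F \<Longrightarrow> g \<in> G \<Longrightarrow> (\<lambda>x. f x * g x) \<in> product_sums F G"
| "h1 \<in> product_sums F G \<Longrightarrow> h2 \<in> product_sums F G \<Longrightarrow> (\<lambda>x. h1 x + h2 x) \<in> product_sums F G"

lemma deriv_closed_product_sums:
  assumes "deriv_closed F" "deriv_closed G" shows "deriv_closed (product_sums F G)"
  unfolding deriv_closed_def
proof
  fix h assume "h \<in> product_sums F G"
  then show "\<exists>h'\<in>product_sums F G. \<forall>x. (h has_real_derivative h' x) (at x)"
  proof induct
    case (1 f g)
    obtain f' where f': "f' \<in> F" "\<And>x. (f has_real_derivative f' x) (at x)"
      using assms(1) 1 deriv_closed_def by blast
    obtain g' where g': "g' \<in> G" "\<And>x. (g has_real_derivative g' x) (at x)"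
      using assms(2) 1 deriv_closed_def by blast
    have "(\<lambda>x. f' x * g x + f x * g' x) \<in> product_sums F G"
      using 1 f' g' by (intro product_sums.intros) auto
    moreover have "\<And>x. ((\<lambda>x. f x * g x) has_real_derivative f' x * g x + f x * g' x) (at x)"
      using f'(2) g'(2) by (auto intro!: derivative_eq_intros)
    ultimately show ?case by (intro bexI[of _ "\<lambda>x. f' x * g x + f x * g' x"]) auto
  next
    case (2 h1 h2)
    then obtain d1 d2 where "d1 \<in> product_sums F G" "d2 \<in> product_sums F G"
      "\<And>x. (h1 has_real_derivative d1 x) (at x)" "\<And>x. (h2 has_real_derivative d2 x) (at x)"
      by blast
    then show ?case
      by (intro bexI[of _ "\<lambda>x. d1 x + d2 x"]) (auto intro!: derivative_eq_intros product_sums.intros)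
  qed
qed

lemma smooth_real_mult:
  assumes "smooth_real f" "smooth_real g" shows "smooth_real (\<lambda>x. f x * g x)"
  using assms deriv_closed_product_sums product_sums.intros(1) unfolding smooth_real_def by blast

lemma has_real_derivative_integral_from:
  fixes \<psi> :: "real \<Rightarrow> real"
  assumes cont: "continuous_on UNIV \<psi>" and zero: "\<And>x. x \<le> a \<Longrightarrow> \<psi> x = 0"
  shows "((\<lambda>s. integral {a-1..s} \<psi>) has_real_derivative \<psi> s) (at s)"
proof (cases "s < a")
  case True
  have "((\<lambda>s. 0) has_real_derivative \<psi> s) (at s)" using True zero by simp
  then show ?thesis
  proof (rule has_field_derivative_transform_within_open[where S="{..<a}"])
    fix t assume "t \<in> {..<a}"
    then have "integral {a-1..t} \<psi> = integral {a-1..t} (\<lambda>_. 0::real)"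
      by (intro integral_cong) (auto intro!: zero)
    then show "0 = integral {a-1..t} \<psi>" by simp
  qed (use True in auto)
next
  case False
  have "((\<lambda>s. integral {a-1..s} \<psi>) has_real_derivative \<psi> s) (at s within {a-1..s+1})"
    by (rule integral_has_real_derivative) (use False cont continuous_on_subset in auto)
  moreover have "at s within {a-1..s+1} = at s" using False by (intro at_within_Icc_at) auto
  ultimately show ?thesis by simp
qed

lemma smooth_real_integral_from:
  fixes \<psi> :: "real \<Rightarrow> real"
  assumes "smooth_real \<psi>" and zero: "\<And>x. x \<le> a \<Longrightarrow> \<psi> x = 0"
  shows "smooth_real (\<lambda>s. integral {a-1..s} \<psi>)"
proof -
  obtain F where F: "deriv_closed F" "\<psi> \<in> F" using assms smooth_real_def by auto
  have "deriv_closed (insert (\<lambda>s. integral {a-1..s} \<psi>) F)"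
    using F has_real_derivative_integral_from[OF smooth_real_continuous_on[OF assms(1)] zero]
    unfolding deriv_closed_def by blast
  then show ?thesis unfolding smooth_real_def by blast
qed

definition exp_recip_poly :: "(real \<Rightarrow> real) \<Rightarrow> real \<Rightarrow> real" where
  "exp_recip_poly P x = (if 0 < x then P (1/x) * exp (- (1/x)) else 0)"

lemma tendsto_poly_div_exp:
  assumes "real_polynomial_function P"
  shows "((\<lambda>y. y * P y / exp y) \<longlongrightarrow> 0) at_top"
proof -
  obtain a n where P: "P = (\<lambda>x. \<Sum>i\<le>n. a i * x^i)"
    using real_polynomial_function_imp_sum[OF assms] by blast
  have "((\<lambda>y. \<Sum>i\<le>n. a i * (y ^ Suc i / exp y)) \<longlongrightarrow> (\<Sum>i\<le>n. a i * 0)) at_top"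
    by (intro tendsto_sum tendsto_mult tendsto_const tendsto_power_div_exp_0)
  moreover have "(\<lambda>y. \<Sum>i\<le>n. a i * (y ^ Suc i / exp y)) = (\<lambda>y. y * P y / exp y)"
    unfolding P by (auto simp: sum_divide_distrib sum_distrib_left field_simps)
  ultimately show ?thesis by simp
qed

lemma exp_recip_poly_has_derivative_0:
  assumes "real_polynomial_function P"
  shows "(exp_recip_poly P has_real_derivative 0) (at 0)"
proof -
  have "((\<lambda>h. (\<lambda>y. y * P y / exp y) (inverse h)) \<longlongrightarrow> 0) (at_right 0)"
    by (rule filterlim_compose[OF tendsto_poly_div_exp[OF assms] filterlim_inverse_at_top_right])
  moreover have "eventually (\<lambda>h. (\<lambda>y. y * P y / exp y) (inverse h) = exp_recip_poly P h / h) (at_right 0)"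
    by (rule eventually_mono[OF eventually_at_right_less])
       (auto simp: exp_recip_poly_def exp_minus field_simps)
  ultimately have right: "((\<lambda>h. exp_recip_poly P h / h) \<longlongrightarrow> 0) (at_right 0)"
    by (rule Lim_transform_eventually)
  have left: "((\<lambda>h. exp_recip_poly P h / h) \<longlongrightarrow> 0) (at_left 0)"
    by (rule tendsto_eventually, rule eventually_mono[OF eventually_at_left_real[of "-1::real" 0]])
       (auto simp: exp_recip_poly_def)
  have "((\<lambda>h. exp_recip_poly P h / h) \<longlongrightarrow> 0) (at 0)"
    using right left by (simp add: filterlim_split_at_real)
  then show ?thesis
    by (simp add: has_field_derivative_iff exp_recip_poly_def)
qed

lemma exp_recip_poly_has_derivative:
  assumes "real_polynomial_function P"
  obtains Q where "real_polynomial_function Q"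
    "\<And>x. (exp_recip_poly P has_real_derivative exp_recip_poly Q x) (at x)"
proof -
  obtain P' where P': "real_polynomial_function P'" "\<And>x. (P has_real_derivative P' x) (at x)"
    using has_real_derivative_polynomial_function[OF assms] by blast
  define Q where "Q = (\<lambda>y. (P y - P' y) * y^2)"
  have Q: "real_polynomial_function Q"
    unfolding Q_def using assms P'(1)
    by (intro real_polynomial_function.intros(4) real_polynomial_function_diff
        real_polynomial_function_power real_polynomial_function.intros(1)[OF bounded_linear_ident])
  have "(exp_recip_poly P has_real_derivative exp_recip_poly Q x) (at x)" for x
  proof (cases x "0::real" rule: linorder_cases)
    case less
    have "((\<lambda>x. 0) has_real_derivative exp_recip_poly Q x) (at x)"
      using less by (simp add: exp_recip_poly_def)
    then show ?thesis
      by (rule has_field_derivative_transform_within_open[where S="{..<0}"])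
         (use less in \<open>auto simp: exp_recip_poly_def\<close>)
  next
    case equal
    then show ?thesis
      using exp_recip_poly_has_derivative_0[OF assms] by (simp add: exp_recip_poly_def)
  next
    case greater
    have "((\<lambda>x. P (1/x) * exp (- (1/x))) has_real_derivative
           P' (1/x) * (- 1 / x^2) * exp (- (1/x)) + P (1/x) * (exp (- (1/x)) * (1 / x^2))) (at x)"
      using greater
      by (auto intro!: derivative_eq_intros DERIV_chain2[OF P'(2)] simp: power2_eq_square)
    then have "((\<lambda>x. P (1/x) * exp (- (1/x))) has_real_derivative exp_recip_poly Q x) (at x)"
      using greater by (simp add: exp_recip_poly_def Q_def field_simps power2_eq_square)
    then show ?thesis
      by (rule has_field_derivative_transform_within_open[where S="{0<..}"])
         (use greater in \<open>auto simp: exp_recip_poly_def\<close>)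
  qed
  then show ?thesis using Q that by blast
qed

lemma smooth_real_exp_recip_poly:
  assumes "real_polynomial_function P" shows "smooth_real (exp_recip_poly P)"
proof -
  have "deriv_closed {exp_recip_poly Q | Q. real_polynomial_function Q}"
    unfolding deriv_closed_def
  proof safe
    fix Q :: "real \<Rightarrow> real" assume "real_polynomial_function Q"
    then obtain Q' where "real_polynomial_function Q'"
      "\<And>x. (exp_recip_poly Q has_real_derivative exp_recip_poly Q' x) (at x)"
      by (rule exp_recip_poly_has_derivative) blast
    then show "\<exists>f'\<in>{exp_recip_poly Q | Q. real_polynomial_function Q}.
        \<forall>x. (exp_recip_poly Q has_real_derivative f' x) (at x)" by blast
  qed
  then show ?thesis using assms unfolding smooth_real_def by blast
qed

definition exp_recip :: "real \<Rightarrow> real" where "exp_recip = exp_recip_poly (\<lambda>_. 1)"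

lemma smooth_real_exp_recip: "smooth_real exp_recip"
  unfolding exp_recip_def by (rule smooth_real_exp_recip_poly) auto

lemma exp_recip_mono: "x \<le> y \<Longrightarrow> exp_recip x \<le> exp_recip y"
  by (auto simp: exp_recip_def exp_recip_poly_def divide_simps)

lemma exp_recip_pos: "x > 0 \<Longrightarrow> exp_recip x > 0"
  and exp_recip_eq_0: "x \<le> 0 \<Longrightarrow> exp_recip x = 0"
  and exp_recip_le_1: "exp_recip x \<le> 1"
  and exp_recip_nonneg: "exp_recip x \<ge> 0"
  by (auto simp: exp_recip_def exp_recip_poly_def)

definition bump :: "real \<Rightarrow> real \<Rightarrow> real \<Rightarrow> real" where
  "bump a b s = exp_recip (s - a) * exp_recip (b - s)"

lemma smooth_real_bump: "smooth_real (bump a b)"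
proof -
  have "smooth_real (\<lambda>s. exp_recip (1 * s + (- a)) * exp_recip ((-1) * s + b))"
    by (intro smooth_real_mult smooth_real_affine smooth_real_exp_recip)
  then show ?thesis unfolding bump_def by (simp add: fun_eq_iff)
qed

lemma bump_nonneg: "bump a b s \<ge> 0"
  and bump_le_1: "bump a b s \<le> 1"
  and bump_eq_0: "s \<notin> {a<..<b} \<Longrightarrow> bump a b s = 0"
  and bump_pos: "s \<in> {a<..<b} \<Longrightarrow> bump a b s > 0"
  unfolding bump_def
  using exp_recip_nonneg[of "s-a"] exp_recip_nonneg[of "b-s"] exp_recip_le_1[of "s-a"]
    exp_recip_le_1[of "b-s"]
  by (auto simp: exp_recip_eq_0 exp_recip_pos mult_le_one)

lemma bump_ge_on_Icc:
  assumes "a < a'" "b' < b"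
  obtains c where "c > 0" "\<And>s. s \<in> {a'..b'} \<Longrightarrow> c \<le> bump a b s"
proof
  show "exp_recip (a' - a) * exp_recip (b - b') > 0" using assms by (simp add: exp_recip_pos)
  show "exp_recip (a' - a) * exp_recip (b - b') \<le> bump a b s" if "s \<in> {a'..b'}" for s
    unfolding bump_def using that by (intro mult_mono exp_recip_mono exp_recip_nonneg) auto
qed

section \<open>Smooth functions of \<open>|x|\<^sup>2\<close>\<close>

definition pd_closed :: "(real^'n::finite \<Rightarrow> real) set \<Rightarrow> bool" where
  "pd_closed F \<longleftrightarrow>
     (\<forall>f\<in>F. \<exists>D. (\<forall>x. (f has_derivative D x) (at x)) \<and> (\<forall>i. (\<lambda>x. D x (axis i 1)) \<in> F))"

lemma pd_closed_iter_pd: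
  assumes "pd_closed F" "f \<in> F" shows "iter_pd js f \<in> F"
proof (induction js)
  case Nil then show ?case using assms by simp
next
  case (Cons i js)
  obtain D where D: "\<And>x. (iter_pd js f has_derivative D x) (at x)" "(\<lambda>x. D x (axis i 1)) \<in> F"
    using assms(1) Cons pd_closed_def by metis
  have "pd i (iter_pd js f) = (\<lambda>x. D x (axis i 1))"
    unfolding pd_def using D(1) frechet_derivative_at by metis
  then show ?case using D by simp
qed

lemma pd_closed_imp_smooth_fun:
  assumes "pd_closed F" "f \<in> F" shows "smooth_fun f"
  unfolding smooth_fun_def
proof (intro allI)
  fix js x
  obtain D where "\<And>x. (iter_pd js f has_derivative D x) (at x)"
    using pd_closed_iter_pd[OF assms] assms(1) pd_closed_def by metis
  then show "iter_pd js f differentiable (at x)" unfolding differentiable_def by blast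
qed

inductive_set radial_algebra :: "(real \<Rightarrow> real) set \<Rightarrow> (real^'n::finite \<Rightarrow> real) set"
  for F where
  comp: "g \<in> F \<Longrightarrow> (\<lambda>x. g (x \<bullet> x)) \<in> radial_algebra F"
| coord: "(\<lambda>x. x $ i) \<in> radial_algebra F"
| const: "(\<lambda>x. c) \<in> radial_algebra F"
| add: "f \<in> radial_algebra F \<Longrightarrow> g \<in> radial_algebra F \<Longrightarrow> (\<lambda>x. f x + g x) \<in> radial_algebra F"
| mult: "f \<in> radial_algebra F \<Longrightarrow> g \<in> radial_algebra F \<Longrightarrow> (\<lambda>x. f x * g x) \<in> radial_algebra F"

lemma has_derivative_comp_inner_self:
  assumes "(G has_real_derivative g) (at (x \<bullet> x))"
  shows "((\<lambda>x. G (x \<bullet> x)) has_derivative (\<lambda>h. 2 * (x \<bullet> h) * g)) (at x)"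
proof -
  have "((\<lambda>x. G (x \<bullet> x)) has_derivative (\<lambda>h. (x \<bullet> h + h \<bullet> x) * g)) (at x)"
    by (rule DERIV_compose_FDERIV[where g="\<lambda>x. x \<bullet> x", OF assms])
       (auto intro!: derivative_eq_intros)
  then show ?thesis by (simp add: inner_commute)
qed

lemma pd_closed_radial_algebra:
  assumes F: "deriv_closed F" shows "pd_closed (radial_algebra F :: (real^'n::finite \<Rightarrow> real) set)"
  unfolding pd_closed_def
proof
  fix f :: "real^'n \<Rightarrow> real" assume "f \<in> radial_algebra F"
  then show "\<exists>D. (\<forall>x. (f has_derivative D x) (at x)) \<and> (\<forall>i. (\<lambda>x. D x (axis i 1)) \<in> radial_algebra F)"
  proof induct
    case (comp g)
    obtain g' where g': "g' \<in> F" "\<And>x. (g has_real_derivative g' x) (at x)"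
      using F comp deriv_closed_def by blast
    have "(\<lambda>x::real^'n. 2 * x $ i * g' (x \<bullet> x)) \<in> radial_algebra F" for i
      by (intro radial_algebra.intros g')
    then show ?case using has_derivative_comp_inner_self[OF g'(2)[of "x \<bullet> x" for x]]
      by (intro exI[of _ "\<lambda>x h. 2 * (x \<bullet> h) * g' (x \<bullet> x)"]) (auto simp: inner_axis)
  next
    case (coord i)
    have "((\<lambda>x::real^'n. x $ i) has_derivative (\<lambda>h. h $ i)) (at x)" for x
      by (rule bounded_linear.has_derivative[OF bounded_linear_vec_nth has_derivative_ident])
    then show ?case by (intro exI[of _ "\<lambda>x h. h $ i"]) (auto intro: radial_algebra.const)
  next
    case (const c)
    then show ?case by (intro exI[of _ "\<lambda>x h. 0"]) (auto intro: radial_algebra.const)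
  next
    case (add f g)
    then obtain Df Dg where "\<And>x. (f has_derivative Df x) (at x)"
      "\<And>i. (\<lambda>x. Df x (axis i 1)) \<in> radial_algebra F"
      "\<And>x. (g has_derivative Dg x) (at x)" "\<And>i. (\<lambda>x. Dg x (axis i 1)) \<in> radial_algebra F"
      by metis
    then show ?case
      by (intro exI[of _ "\<lambda>x h. Df x h + Dg x h"])
         (auto intro!: derivative_eq_intros radial_algebra.intros)
  next
    case (mult f g)
    then obtain Df Dg where "\<And>x. (f has_derivative Df x) (at x)"
      "\<And>i. (\<lambda>x. Df x (axis i 1)) \<in> radial_algebra F"
      "\<And>x. (g has_derivative Dg x) (at x)" "\<And>i. (\<lambda>x. Dg x (axis i 1)) \<in> radial_algebra F"
      by metis
    then show ?case using mult(1,3)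
      by (intro exI[of _ "\<lambda>x h. f x * Dg x h + Df x h * g x"])
         (auto intro!: derivative_eq_intros radial_algebra.intros)
  qed
qed

lemma smooth_fun_comp_inner_self:
  assumes "smooth_real G" shows "smooth_fun (\<lambda>x::real^'n::finite. G (x \<bullet> x))"
proof -
  obtain F where "deriv_closed F" "G \<in> F" using assms smooth_real_def by auto
  then show ?thesis
    using pd_closed_imp_smooth_fun[OF pd_closed_radial_algebra] radial_algebra.comp by blast
qed

lemma pd_comp_inner_self:
  assumes "(G has_real_derivative G' (x \<bullet> x)) (at (x \<bullet> x))"
  shows "pd i (\<lambda>x::real^'n::finite. G (x \<bullet> x)) x = 2 * x $ i * G' (x \<bullet> x)"
  using frechet_derivative_at[OF has_derivative_comp_inner_self[OF assms], symmetric]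
  unfolding pd_def by (simp add: inner_axis inner_commute)

section \<open>Polar coordinates\<close>

definition radial_density :: "nat \<Rightarrow> real \<Rightarrow> real" where
  "radial_density d r = indicator {0..} r * (real d * unit_ball_vol (real d) * r ^ (d - 1))"

lemma radial_density_nonneg: "radial_density d r \<ge> 0"
  by (auto simp: radial_density_def indicator_def)

lemma radial_density_pos: "d \<ge> 1 \<Longrightarrow> r > 0 \<Longrightarrow> radial_density d r > 0"
  by (auto simp: radial_density_def)

lemma borel_measurable_radial_density[measurable]: "radial_density d \<in> borel_measurable borel"
  unfolding radial_density_def by measurable

lemma emeasure_lborel_norm_le:
  "emeasure lborel {x::'a::euclidean_space. norm x \<le> t} =
     (if t < 0 then 0 else ennreal (unit_ball_vol DIM('a) * t ^ DIM('a)))"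
proof (cases "t < 0")
  case True
  then have "{x::'a. norm x \<le> t} = {}" by (auto simp: not_le intro: less_le_trans[OF _ norm_ge_zero])
  then show ?thesis using True by simp
next
  case False
  have "{x::'a. norm x \<le> t} = cball 0 t" by (auto simp: dist_norm)
  then show ?thesis using False emeasure_cball[of t "0::'a"] by simp
qed

lemma emeasure_density_radial_density_atMost:
  assumes "d \<ge> 1"
  shows "emeasure (density lborel (\<lambda>r. ennreal (radial_density d r))) {..t} =
     (if t < 0 then 0 else ennreal (unit_ball_vol d * t ^ d))"
proof -
  have "emeasure (density lborel (\<lambda>r. ennreal (radial_density d r))) {..t}
      = (\<integral>\<^sup>+ r. ennreal (radial_density d r) * indicator {..t} r \<partial>lborel)"
    by (rule emeasure_density) auto
  also have "\<dots> = (\<integral>\<^sup>+ r\<in>{0..t}. ennreal (real d * unit_ball_vol (real d) * r ^ (d - 1)) \<partial>lborel)"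
    by (rule nn_integral_cong) (simp add: radial_density_def indicator_def)
  also have "\<dots> = (if t < 0 then 0 else ennreal (unit_ball_vol d * t ^ d))"
  proof (cases "t < 0")
    case True then show ?thesis by (simp add: indicator_def)
  next
    case False
    have "(\<integral>\<^sup>+ r\<in>{0..t}. ennreal (real d * unit_ball_vol (real d) * r ^ (d - 1)) \<partial>lborel)
        = ennreal (unit_ball_vol (real d) * t ^ d - unit_ball_vol (real d) * 0 ^ d)"
      by (rule nn_integral_FTC_Icc) (use False in \<open>auto intro!: derivative_eq_intros\<close>)
    then show ?thesis using False assms by simp
  qed
  finally show ?thesis .
qed

lemma distr_norm_lborel:
  assumes d: "DIM('a::euclidean_space) \<ge> 1"
  shows "distr lborel borel (norm :: 'a \<Rightarrow> real) = density lborel (\<lambda>r. ennreal (radial_density DIM('a) r))"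
    (is "?M = ?N")
proof (rule measure_eqI_generator_eq_countable[where E="range atMost" and \<Omega>=UNIV
      and A="range (\<lambda>n::nat. {..real n})"])
  show "Int_stable (range atMost :: real set set)" by (auto simp: Int_stable_def)
  have "sets (borel::real measure) = sigma_sets UNIV (range atMost)"
    by (subst borel_eq_atMost) (simp add: sets_measure_of)
  then show "sets ?M = sigma_sets UNIV (range atMost)" "sets ?N = sigma_sets UNIV (range atMost)"
    by simp_all
  have "emeasure ?M {..t} = emeasure lborel {x::'a. norm x \<le> t}" for t
    by (subst emeasure_distr) (auto simp: vimage_def)
  then have eq: "emeasure ?M {..t} = emeasure ?N {..t}" for t
    by (simp add: emeasure_lborel_norm_le emeasure_density_radial_density_atMost[OF d])
  then show "\<And>X. X \<in> range atMost \<Longrightarrow> emeasure ?M X = emeasure ?N X" by auto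
  show "\<Union> (range (\<lambda>n::nat. {..real n})) = UNIV" by (auto intro: real_arch_simple)
  show "emeasure ?M X \<noteq> \<infinity>" if "X \<in> range (\<lambda>n::nat. {..real n})" for X
    using that by (auto simp: eq emeasure_density_radial_density_atMost[OF d])
qed auto

lemma nn_integral_lborel_norm:
  fixes h :: "real \<Rightarrow> ennreal"
  assumes d: "DIM('a::euclidean_space) \<ge> 1" and h[measurable]: "h \<in> borel_measurable borel"
  shows "(\<integral>\<^sup>+ x. h (norm (x::'a)) \<partial>lborel) = (\<integral>\<^sup>+ r. ennreal (radial_density DIM('a) r) * h r \<partial>lborel)"
proof -
  have "(\<integral>\<^sup>+ x. h (norm (x::'a)) \<partial>lborel) = (\<integral>\<^sup>+ r. h r \<partial>distr lborel borel (norm :: 'a \<Rightarrow> real))"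
    by (subst nn_integral_distr) auto
  also have "\<dots> = (\<integral>\<^sup>+ r. ennreal (radial_density DIM('a) r) * h r \<partial>lborel)"
    unfolding distr_norm_lborel[OF d] by (subst nn_integral_density) auto
  finally show ?thesis .
qed

lemma emeasure_inner_self_preimage_eq_0_iff:
  fixes D :: "real set"
  assumes d: "DIM('a::euclidean_space) \<ge> 1" and D[measurable]: "D \<in> sets borel"
    and sub: "D \<subseteq> {a..b}" and a: "0 < a"
  shows "emeasure lborel {x::'a. x \<bullet> x \<in> D} = 0 \<longleftrightarrow> emeasure lborel D = 0"
proof (cases "D = {}")
  case False
  then have ab: "a \<le> b" using sub by auto
  have "emeasure lborel {x::'a. x \<bullet> x \<in> D} = (\<integral>\<^sup>+ x. indicator {x::'a. x \<bullet> x \<in> D} x \<partial>lborel)"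
    by (rule nn_integral_indicator[symmetric]) measurable
  also have "\<dots> = (\<integral>\<^sup>+ x. indicator D (norm x ^ 2) \<partial>(lborel::'a measure))"
    by (rule nn_integral_cong) (auto simp: power2_norm_eq_inner indicator_def)
  also have "\<dots> = (\<integral>\<^sup>+ r. ennreal (radial_density DIM('a) r) * indicator D (r ^ 2) \<partial>lborel)"
    by (rule nn_integral_lborel_norm[OF d, where h="\<lambda>r. indicator D (r^2)"]) measurable
  finally have polar: "emeasure lborel {x::'a. x \<bullet> x \<in> D} =
      (\<integral>\<^sup>+ r. ennreal (radial_density DIM('a) r) * indicator D (r ^ 2) \<partial>lborel)" .
  have "emeasure lborel D = (\<integral>\<^sup>+ s. indicator D s \<partial>lborel)"
    by (rule nn_integral_indicator[symmetric]) simp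
  also have "\<dots> = (\<integral>\<^sup>+ s. ennreal (indicator D s * indicator {0^2..(sqrt b)^2} s) \<partial>lborel)"
    by (rule nn_integral_cong) (use sub a ab in \<open>auto simp: indicator_def\<close>)
  also have "\<dots> = (\<integral>\<^sup>+ r. ennreal (indicator D (r^2) * (2 * r) * indicator {0..sqrt b} r) \<partial>lborel)"
    by (rule nn_integral_substitution[where g="\<lambda>r. r^2"])
       (use a ab in \<open>auto simp: set_borel_measurable_def intro!: derivative_eq_intros continuous_intros\<close>)
  finally have subst: "emeasure lborel D =
      (\<integral>\<^sup>+ r. ennreal (indicator D (r^2) * (2 * r) * indicator {0..sqrt b} r) \<partial>lborel)" .
  have same_zeros: "(ennreal (radial_density DIM('a) r) * indicator D (r ^ 2) = 0) \<longleftrightarrow>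
       (ennreal (indicator D (r^2) * (2 * r) * indicator {0..sqrt b} r) = 0)" for r
  proof (cases "r^2 \<in> D")
    case True
    then have "a \<le> r^2" "r^2 \<le> b" using sub by auto
    then have "r \<noteq> 0" "r \<le> sqrt b" using a real_le_rsqrt by auto
    then show ?thesis using True radial_density_pos[OF d, of r]
      by (cases "r > 0") (auto simp: radial_density_def indicator_def ennreal_eq_0_iff not_le)
  qed (auto simp: indicator_def)
  have [measurable]: "D \<in> sets lborel" by simp
  show ?thesis unfolding polar subst
    by (subst (1 2) nn_integral_0_iff_AE) (use same_zeros in auto)
qed simp

lemma null_sets_inner_self_preimage:
  assumes d: "DIM('a::euclidean_space) \<ge> 1" and N: "N \<in> null_sets lebesgue" and a: "0 < a"
  shows "{x::'a. x \<bullet> x \<in> N \<inter> {a..b}} \<in> null_sets lebesgue"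
proof -
  obtain N' where N': "N' \<in> null_sets lborel" "N \<subseteq> N'"
    using N unfolding null_sets_completion_iff2 by auto
  have Db: "N' \<inter> {a..b} \<in> sets borel" using N' by auto
  have "emeasure lborel (N' \<inter> {a..b}) = 0"
    using N' by (metis Int_lower1 emeasure_eq_0 null_setsD1 null_setsD2 sets_lborel)
  then have "emeasure lborel {x::'a. x \<bullet> x \<in> N' \<inter> {a..b}} = 0"
    using emeasure_inner_self_preimage_eq_0_iff[OF d Db _ a] by auto
  moreover have "{x::'a. x \<bullet> x \<in> N' \<inter> {a..b}} \<in> sets lborel" using Db by measurable
  ultimately have "{x::'a. x \<bullet> x \<in> N' \<inter> {a..b}} \<in> null_sets lborel" by (auto simp: null_sets_def)
  then show ?thesis
    unfolding null_sets_completion_iff2 using N'(2) by (intro bexI[of _ "{x::'a. x \<bullet> x \<in> N' \<inter> {a..b}}"]) auto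
qed

text \<open>Images of compact sets under \<open>x \<mapsto> x \<bullet> x\<close> are compact, so \<open>F\<^sub>\<sigma>\<close> approximations
  of the preimage from inside and of its complement squeeze \<open>B\<close> between two Borel sets whose
  difference has a null preimage.\<close>

lemma sets_lebesgue_of_inner_self_preimage:
  fixes B :: "real set"
  assumes d: "DIM('a::euclidean_space) \<ge> 1" and sub: "B \<subseteq> {a..b}" and a: "0 < a"
    and E: "{x::'a. x \<bullet> x \<in> B} \<in> sets lebesgue"
  shows "B \<in> sets lebesgue"
proof -
  define q where "q = (\<lambda>x::'a. x \<bullet> x)"
  have q_cont: "continuous_on S q" for S unfolding q_def by (intro continuous_intros)
  obtain C T where C: "fsigma C" and T: "T \<in> null_sets lebesgue" and CT: "C \<union> T = {x. q x \<in> B}"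
    using lebesgue_set_almost_fsigma[OF E] unfolding q_def by metis
  have "- {x. q x \<in> B} \<in> sets lebesgue" using sets.compl_sets[OF E] by (simp add: q_def Compl_eq_Diff_UNIV)
  then obtain C' T' where C': "fsigma C'" and T': "T' \<in> null_sets lebesgue"
    and CT': "C' \<union> T' = - {x. q x \<in> B}"
    using lebesgue_set_almost_fsigma by metis
  obtain F :: "nat \<Rightarrow> 'a set" where F: "\<And>n. compact (F n)" "C = (\<Union>n. F n)"
    using C unfolding fsigma_Union_compact by (metis mem_Collect_eq range_subsetD)
  obtain F' :: "nat \<Rightarrow> 'a set" where F': "\<And>n. compact (F' n)" "C' = (\<Union>n. F' n)"
    using C' unfolding fsigma_Union_compact by (metis mem_Collect_eq range_subsetD)
  define Lo where "Lo = (\<Union>n. q ` F n)"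
  define Hi where "Hi = {a..b} - (\<Union>n. q ` F' n)"
  have "q ` F n \<in> sets borel" "q ` F' n \<in> sets borel" for n
    using F(1) F'(1) by (auto intro!: borel_closed compact_imp_closed compact_continuous_image q_cont)
  then have Lo_borel: "Lo \<in> sets borel" and Hi_borel: "Hi \<in> sets borel"
    unfolding Lo_def Hi_def by auto
  have Lo_B: "Lo \<subseteq> B"
    unfolding Lo_def using CT F(2) by blast
  have B_Hi: "B \<subseteq> Hi"
    unfolding Hi_def using CT' F'(2) sub by blast
  have gap: "{x::'a. x \<bullet> x \<in> Hi - Lo} \<subseteq> T \<union> T'"
  proof
    fix x :: 'a assume "x \<in> {x. x \<bullet> x \<in> Hi - Lo}"
    then have "x \<notin> C" "x \<notin> C'"
      unfolding Lo_def Hi_def F(2) F'(2) q_def by blast+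
    then show "x \<in> T \<union> T'" using CT CT' by blast
  qed
  have gap_borel: "{x::'a. x \<bullet> x \<in> Hi - Lo} \<in> sets lborel"
    using Lo_borel Hi_borel by measurable
  have "emeasure lebesgue {x::'a. x \<bullet> x \<in> Hi - Lo} = 0"
    using null_sets_subset[OF null_sets.Un[OF T T'] _ gap] gap_borel by auto
  then have "emeasure lborel {x::'a. x \<bullet> x \<in> Hi - Lo} = 0"
    using gap_borel by (simp add: emeasure_completion)
  then have "emeasure lborel (Hi - Lo) = 0"
    using emeasure_inner_self_preimage_eq_0_iff[OF d _ _ a, of "Hi - Lo" b] Lo_borel Hi_borel
    by (auto simp: Hi_def)
  then have "B - Lo \<in> null_sets lebesgue"
    unfolding null_sets_completion_iff2 using B_Hi Lo_borel Hi_borel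
    by (intro bexI[of _ "Hi - Lo"]) (auto simp: null_sets_def)
  moreover have "Lo \<in> sets lebesgue" using Lo_borel by simp
  ultimately have "(B - Lo) \<union> Lo \<in> sets lebesgue" by blast
  moreover have "(B - Lo) \<union> Lo = B" using Lo_B by auto
  ultimately show ?thesis by simp
qed

lemma borel_measurable_of_comp_inner_self:
  fixes t :: "real \<Rightarrow> real"
  assumes d: "DIM('a::euclidean_space) \<ge> 1" and t_nonneg: "\<And>s. 0 \<le> t s"
    and t_support: "\<And>s. s \<notin> {a..b} \<Longrightarrow> t s = 0" and a: "0 < a"
    and meas: "(\<lambda>x::'a. t (x \<bullet> x)) \<in> borel_measurable lebesgue"
  shows "t \<in> borel_measurable lebesgue"
proof (rule borel_measurableI_greater)
  fix c :: real
  show "{s \<in> space lebesgue. c < t s} \<in> sets lebesgue"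
  proof (cases "c < 0")
    case True
    then have "{s \<in> space lebesgue. c < t s} = UNIV" using t_nonneg by (auto intro: less_le_trans)
    then show ?thesis by simp
  next
    case False
    have "{x::'a. x \<bullet> x \<in> {s. c < t s}} = {x \<in> space lebesgue. c < t (x \<bullet> x)}" by simp
    also have "\<dots> \<in> sets lebesgue" using meas by measurable
    finally have "{s. c < t s} \<in> sets lebesgue"
      using False t_support by (intro sets_lebesgue_of_inner_self_preimage[OF d _ a]) force
    then show ?thesis by simp
  qed
qed

section \<open>Energy of radial cutoffs\<close>

definition shell :: "real \<Rightarrow> real \<Rightarrow> 'a::real_inner set" where
  "shell \<alpha> \<beta> = {x. \<alpha> \<le> x \<bullet> x \<and> x \<bullet> x \<le> \<beta>}"

lemma mem_shell [simp]: "x \<in> shell \<alpha> \<beta> \<longleftrightarrow> \<alpha> \<le> x \<bullet> x \<and> x \<bullet> x \<le> \<beta>"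
  by (simp add: shell_def)

lemma compact_shell: "compact (shell \<alpha> \<beta> :: 'a::euclidean_space set)"
proof -
  have "shell \<alpha> \<beta> = {y::'a. \<alpha> \<le> y \<bullet> y} \<inter> {y. y \<bullet> y \<le> \<beta>}" by auto
  moreover have "closed {y::'a. \<alpha> \<le> y \<bullet> y}" "closed {y::'a. y \<bullet> y \<le> \<beta>}"
    by (intro closed_Collect_le continuous_intros)+
  moreover have "{y::'a. y \<bullet> y \<le> \<beta>} \<subseteq> cball 0 (sqrt \<beta>)"
    by (auto simp: dist_norm power2_norm_eq_inner[symmetric] intro: real_le_rsqrt)
  then have "bounded {y::'a. y \<bullet> y \<le> \<beta>}" using bounded_cball bounded_subset by blast
  ultimately show ?thesis by (simp add: compact_eq_bounded_closed bounded_Int closed_Int)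
qed

lemma sets_lebesgue_shell [measurable]: "shell \<alpha> \<beta> \<in> sets (lebesgue :: 'a::euclidean_space measure)"
  by (simp add: compact_imp_closed compact_shell)

lemma norm_ge_iff_inner: "0 \<le> r \<Longrightarrow> r \<le> norm y \<longleftrightarrow> r\<^sup>2 \<le> y \<bullet> y"
  by (metis norm_ge_zero power2_norm_eq_inner power_mono real_le_rsqrt real_sqrt_abs
      abs_of_nonneg norm_eq_sqrt_inner order.trans)

lemma norm_le_iff_inner: "0 \<le> r \<Longrightarrow> norm y \<le> r \<longleftrightarrow> y \<bullet> y \<le> r\<^sup>2"
  by (metis norm_ge_zero power2_norm_eq_inner power_mono real_le_rsqrt real_sqrt_abs
      abs_of_nonneg norm_eq_sqrt_inner)

lemma shell_disjoint_ball: "0 \<le> r \<Longrightarrow> r\<^sup>2 \<le> \<alpha> \<Longrightarrow> shell \<alpha> \<beta> \<inter> ball 0 r = {}"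
proof -
  assume "0 \<le> r" "r\<^sup>2 \<le> \<alpha>"
  then have "r \<le> norm x" if "x \<in> shell \<alpha> \<beta>" for x :: 'a
    using that norm_ge_iff_inner[of r x] by auto
  then show ?thesis by (force simp: dist_norm)
qed

lemma borel_measurable_continuous_lebesgue:
  fixes f :: "'a::euclidean_space \<Rightarrow> 'b::euclidean_space"
  shows "continuous_on UNIV f \<Longrightarrow> f \<in> borel_measurable lebesgue"
  by (rule measurable_completion) (simp add: borel_measurable_continuous_onI)

lemma integrable_indicator_mult_bounded:
  fixes S :: "'a::euclidean_space set" and f h :: "'a \<Rightarrow> real"
  assumes f: "set_integrable lebesgue S f" and h: "h \<in> borel_measurable lebesgue"
    and B: "\<And>x. x \<in> S \<Longrightarrow> \<bar>h x\<bar> \<le> B"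
  shows "integrable lebesgue (\<lambda>x. indicator S x * f x * h x)"
proof -
  have f': "integrable lebesgue (\<lambda>x. indicator S x * f x)"
    using f by (simp add: set_integrable_def)
  then have meas: "(\<lambda>x. indicator S x * f x * h x) \<in> borel_measurable lebesgue"
    using h borel_measurable_integrable by measurable
  have le: "norm (indicator S x * f x * h x) \<le> norm (B * (indicator S x * f x))" for x
    using B[of x] mult_left_mono[of "\<bar>h x\<bar>" B "\<bar>f x\<bar>"]
    by (cases "x \<in> S") (auto simp: abs_mult mult.commute)
  show ?thesis
    by (rule Bochner_Integration.integrable_bound[OF integrable_mult_right[OF f'] meas])
       (rule AE_I2[OF le])
qed

lemma quadratic_form_le_matnorm:
  fixes A :: "'n::finite \<Rightarrow> 'n \<Rightarrow> real" and v :: "'n \<Rightarrow> real"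
  shows "(\<Sum>i\<in>UNIV. \<Sum>j\<in>UNIV. A i j * v i * v j)
    \<le> sqrt (\<Sum>i\<in>UNIV. \<Sum>j\<in>UNIV. (A i j)\<^sup>2) * (\<Sum>i\<in>UNIV. (v i)\<^sup>2)"
proof -
  let ?f = "\<lambda>p::'n\<times>'n. A (fst p) (snd p)" and ?g = "\<lambda>p::'n\<times>'n. v (fst p) * v (snd p)"
  have "(\<Sum>i\<in>UNIV. \<Sum>j\<in>UNIV. A i j * v i * v j) = (\<Sum>p\<in>UNIV\<times>UNIV. ?f p * ?g p)"
    by (subst sum.cartesian_product) (simp add: case_prod_beta mult.assoc)
  also have "\<dots> \<le> (\<Sum>p\<in>UNIV\<times>UNIV. \<bar>?f p\<bar> * \<bar>?g p\<bar>)"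
    by (intro sum_mono) (metis abs_ge_self abs_mult)
  also have "\<dots> \<le> L2_set ?f (UNIV\<times>UNIV) * L2_set ?g (UNIV\<times>UNIV)" by (rule L2_set_mult_ineq)
  also have "L2_set ?f (UNIV\<times>UNIV) = sqrt (\<Sum>i\<in>UNIV. \<Sum>j\<in>UNIV. (A i j)\<^sup>2)"
    unfolding L2_set_def by (subst sum.cartesian_product) (simp add: case_prod_beta)
  also have "L2_set ?g (UNIV\<times>UNIV) = sqrt ((\<Sum>i\<in>UNIV. (v i)\<^sup>2)\<^sup>2)"
  proof -
    have "(\<Sum>p\<in>UNIV\<times>UNIV. (?g p)\<^sup>2) = (\<Sum>i\<in>UNIV. \<Sum>j\<in>UNIV. (v i)\<^sup>2 * (v j)\<^sup>2)"
      unfolding sum.cartesian_product by (simp add: power_mult_distrib case_prod_beta)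
    also have "\<dots> = (\<Sum>i\<in>UNIV. (v i)\<^sup>2)\<^sup>2" by (simp add: power2_eq_square sum_product)
    finally show ?thesis unfolding L2_set_def by simp
  qed
  also have "\<dots> = (\<Sum>i\<in>UNIV. (v i)\<^sup>2)" by (simp add: sum_nonneg)
  finally show ?thesis .
qed

lemma weighted_quadratic_form_le:
  assumes "0 < \<phi>" "matnorm a x * \<phi> \<le> P"
  shows "\<phi> * (\<Sum>i\<in>UNIV. \<Sum>j\<in>UNIV. a i j x * v i * v j) \<le> P * (\<Sum>i\<in>UNIV. (v i)\<^sup>2)"
proof -
  have "\<phi> * (\<Sum>i\<in>UNIV. \<Sum>j\<in>UNIV. a i j x * v i * v j) \<le> \<phi> * (matnorm a x * (\<Sum>i\<in>UNIV. (v i)\<^sup>2))"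
    unfolding matnorm_def using assms(1) by (intro mult_left_mono quadratic_form_le_matnorm) auto
  also have "\<dots> = (matnorm a x * \<phi>) * (\<Sum>i\<in>UNIV. (v i)\<^sup>2)" by simp
  also have "\<dots> \<le> P * (\<Sum>i\<in>UNIV. (v i)\<^sup>2)"
    using assms(2) by (intro mult_right_mono) (auto intro: sum_nonneg)
  finally show ?thesis .
qed

lemma borel_measurable_iter_pd_C0inf:
  assumes "C0inf u" shows "iter_pd js u \<in> borel_measurable lebesgue"
proof -
  have "iter_pd js u differentiable (at x)" for x using assms unfolding C0inf_def smooth_fun_def by blast
  then have "continuous_on UNIV (iter_pd js u)"
    by (intro continuous_at_imp_continuous_on) (auto intro: differentiable_imp_continuous_within)
  then show ?thesis by (rule borel_measurable_continuous_lebesgue)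
qed

lemma Eform_eq_integral:
  fixes a :: "'n::finite \<Rightarrow> 'n \<Rightarrow> real^'n \<Rightarrow> real" and \<phi> u :: "real^'n \<Rightarrow> real"
  assumes phi_meas: "\<phi> \<in> borel_measurable lebesgue"
    and phi_pos: "AE x in lebesgue. \<phi> x > 0"
    and a_meas: "\<And>i j. a i j \<in> borel_measurable lebesgue"
    and wd: "form_well_defined a \<phi>" and u: "C0inf u"
  shows "integrable lebesgue (\<lambda>x. \<phi> x * (\<Sum>i\<in>UNIV. \<Sum>j\<in>UNIV. a i j x * pd i u x * pd j u x))"
    and "Eform a \<phi> u u = (\<integral>x. \<phi> x * (\<Sum>i\<in>UNIV. \<Sum>j\<in>UNIV. a i j x * pd i u x * pd j u x) \<partial>lebesgue)"
proof -
  define Q where "Q = (\<lambda>x. \<Sum>i\<in>UNIV. \<Sum>j\<in>UNIV. a i j x * pd i u x * pd j u x)"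
  have integrable_ij: "integrable (wmeasure \<phi>) (\<lambda>x. a i j x * pd i u x * pd j u x)" for i j
    using wd u unfolding form_well_defined_def by blast
  have [measurable]: "a i j \<in> borel_measurable lebesgue" "pd i u \<in> borel_measurable lebesgue" for i j
    using a_meas borel_measurable_iter_pd_C0inf[OF u, of "[i]"] by auto
  have Q_meas: "Q \<in> borel_measurable lebesgue" unfolding Q_def by measurable
  have phi_nonneg: "AE x in lebesgue. 0 \<le> \<phi> x" using phi_pos by eventually_elim auto
  have "integrable (wmeasure \<phi>) Q" unfolding Q_def using integrable_ij by simp
  then show "integrable lebesgue (\<lambda>x. \<phi> x * Q x)"
    unfolding wmeasure_def using phi_nonneg phi_meas Q_meas by (subst (asm) integrable_density) auto
  have "Eform a \<phi> u u = (\<integral>x. Q x \<partial>wmeasure \<phi>)"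
    unfolding Eform_def Q_def using integrable_ij by (simp add: integral_sum)
  also have "\<dots> = (\<integral>x. \<phi> x * Q x \<partial>lebesgue)"
    unfolding wmeasure_def using phi_nonneg phi_meas Q_meas by (subst integral_density) auto
  finally show "Eform a \<phi> u u = (\<integral>x. \<phi> x * Q x \<partial>lebesgue)" .
qed

lemma Eform_comp_inner_self_le:
  fixes a :: "'n::finite \<Rightarrow> 'n \<Rightarrow> real^'n \<Rightarrow> real" and \<phi> :: "real^'n \<Rightarrow> real"
    and \<Phi> :: "real \<Rightarrow> real" and K :: "(real^'n) set" and G G' :: "real \<Rightarrow> real"
  assumes phi_meas: "\<phi> \<in> borel_measurable lebesgue"
    and phi_pos: "AE x in lebesgue. \<phi> x > 0"
    and a_meas: "\<And>i j. a i j \<in> borel_measurable lebesgue"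
    and wd: "form_well_defined a \<phi>"
    and Phi_loc: "\<And>S. compact S \<Longrightarrow> S \<subseteq> - K \<Longrightarrow> set_integrable lebesgue S (\<lambda>x. \<Phi> (norm x))"
    and bound: "\<And>x. x \<notin> K \<Longrightarrow> matnorm a x * \<phi> x \<le> \<Phi> (norm x)"
    and shell_K: "shell \<alpha> \<beta> \<inter> K = {}"
    and C0: "C0inf (\<lambda>x::real^'n. G (x \<bullet> x))"
    and G': "\<And>s. (G has_real_derivative G' s) (at s)" and G'_cont: "continuous_on UNIV G'"
    and G'_0: "\<And>s. s \<notin> {\<alpha>..\<beta>} \<Longrightarrow> G' s = 0"
  shows "Eform a \<phi> (\<lambda>x. G (x \<bullet> x)) (\<lambda>x. G (x \<bullet> x)) \<le>
    integral\<^sup>L lebesgue (\<lambda>x::real^'n.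
      indicator (shell \<alpha> \<beta>) x * \<Phi> (norm x) * (4 * (G' (x \<bullet> x))\<^sup>2 * (x \<bullet> x)))"
proof -
  define u where "u = (\<lambda>x::real^'n. G (x \<bullet> x))"
  define v where "v = (\<lambda>(x::real^'n) i. 2 * x $ i * G' (x \<bullet> x))"
  define Q where "Q = (\<lambda>x. \<Sum>i\<in>UNIV. \<Sum>j\<in>UNIV. a i j x * v x i * v x j)"
  define H where "H = (\<lambda>x::real^'n. indicator (shell \<alpha> \<beta>) x * \<Phi> (norm x) * (4 * (G' (x \<bullet> x))\<^sup>2 * (x \<bullet> x)))"
  have pd_u: "pd i u = (\<lambda>x. v x i)" for i
    unfolding u_def v_def by (rule ext) (rule pd_comp_inner_self, rule G')
  have u: "C0inf u" unfolding u_def by (rule C0)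
  have Eform_eq: "Eform a \<phi> u u = (\<integral>x. \<phi> x * Q x \<partial>lebesgue)"
    and integrable_Q: "integrable lebesgue (\<lambda>x. \<phi> x * Q x)"
    using Eform_eq_integral[OF phi_meas phi_pos a_meas wd u] by (simp_all add: Q_def pd_u)
  have H_factor_cont: "continuous_on UNIV (\<lambda>x::real^'n. 4 * (G' (x \<bullet> x))\<^sup>2 * (x \<bullet> x))"
    by (auto intro!: continuous_intros continuous_on_compose2[OF G'_cont])
  obtain B where "\<And>x::real^'n. x \<in> shell \<alpha> \<beta> \<Longrightarrow> \<bar>4 * (G' (x \<bullet> x))\<^sup>2 * (x \<bullet> x)\<bar> \<le> B"
    using compact_imp_bounded[OF compact_continuous_image[OF
          continuous_on_subset[OF H_factor_cont subset_UNIV] compact_shell[of \<alpha> \<beta>]]]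
    unfolding bounded_iff by (auto simp del: mem_shell)
  then have integrable_H: "integrable lebesgue H"
    unfolding H_def using shell_K
    by (intro integrable_indicator_mult_bounded Phi_loc compact_shell
        borel_measurable_continuous_lebesgue[OF H_factor_cont]) auto
  have "AE x in lebesgue. \<phi> x * Q x \<le> H x"
    using phi_pos
  proof eventually_elim
    fix x assume phi_x: "0 < \<phi> x"
    show "\<phi> x * Q x \<le> H x"
    proof (cases "x \<in> shell \<alpha> \<beta>")
      case True
      then have "x \<notin> K" using shell_K by auto
      have sum_v: "(\<Sum>i\<in>UNIV. (v x i)\<^sup>2) = 4 * (G' (x \<bullet> x))\<^sup>2 * (x \<bullet> x)"
        by (simp add: v_def power_mult_distrib inner_vec_def sum_distrib_left sum_distrib_right
            power2_eq_square mult_ac)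
      have "\<phi> x * Q x \<le> \<Phi> (norm x) * (\<Sum>i\<in>UNIV. (v x i)\<^sup>2)"
        unfolding Q_def by (rule weighted_quadratic_form_le[OF phi_x bound[OF \<open>x \<notin> K\<close>]])
      then show ?thesis using True by (simp add: H_def sum_v)
    next
      case False
      then have "G' (x \<bullet> x) = 0" using G'_0 by auto
      then show ?thesis using False by (simp add: Q_def v_def H_def)
    qed
  qed
  then have "(\<integral>x. \<phi> x * Q x \<partial>lebesgue) \<le> integral\<^sup>L lebesgue H"
    by (rule integral_mono_AE[OF integrable_Q integrable_H])
  then show ?thesis unfolding u_def[symmetric] Eform_eq H_def .
qed

definition radial_cutoff :: "(real \<Rightarrow> real) \<Rightarrow> real \<Rightarrow> real \<Rightarrow> 'a::real_inner \<Rightarrow> real" where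
  "radial_cutoff \<psi> \<alpha> \<beta> x = 1 - integral {\<alpha>-1..x \<bullet> x} \<psi> / integral {\<alpha>-1..\<beta>} \<psi>"

context
  fixes \<psi> :: "real \<Rightarrow> real" and \<alpha> \<beta> :: real
  assumes \<psi>_smooth: "smooth_real \<psi>" and \<psi>_nonneg: "\<And>s. 0 \<le> \<psi> s"
    and \<psi>_below: "\<And>s. s \<le> \<alpha> \<Longrightarrow> \<psi> s = 0" and \<psi>_above: "\<And>s. \<beta> \<le> s \<Longrightarrow> \<psi> s = 0"
    and \<psi>_total: "integral {\<alpha>-1..\<beta>} \<psi> > 0"
begin

private lemma \<psi>_cont: "continuous_on UNIV \<psi>"
  by (rule smooth_real_continuous_on[OF \<psi>_smooth])

private lemma primitive_has_derivative:
  "((\<lambda>s. integral {\<alpha>-1..s} \<psi>) has_real_derivative \<psi> s) (at s)"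
  by (rule has_real_derivative_integral_from[OF \<psi>_cont \<psi>_below])

private lemma primitive_eq_0: "s \<le> \<alpha> \<Longrightarrow> integral {\<alpha>-1..s} \<psi> = 0"
  using integral_cong[of "{\<alpha>-1..s}" \<psi> "\<lambda>_. 0"] \<psi>_below by simp

private lemma primitive_eq_total:
  assumes "\<beta> \<le> s" shows "integral {\<alpha>-1..s} \<psi> = integral {\<alpha>-1..\<beta>} \<psi>"
proof -
  have "\<alpha> - 1 \<le> \<beta>"
  proof (rule ccontr)
    assume "\<not> \<alpha> - 1 \<le> \<beta>"
    then have "{\<alpha>-1..\<beta>} = {}" by simp
    then show False using \<psi>_total by simp
  qed
  have "\<psi> integrable_on {\<alpha>-1..s}"
    by (rule integrable_continuous_real) (rule continuous_on_subset[OF \<psi>_cont], auto)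
  then have "integral {\<alpha>-1..s} \<psi> = integral {\<alpha>-1..\<beta>} \<psi> + integral {\<beta>..s} \<psi>"
    using Henstock_Kurzweil_Integration.integral_combine[of "\<alpha>-1" \<beta> s \<psi>] \<open>\<alpha> - 1 \<le> \<beta>\<close> assms by simp
  moreover have "integral {\<beta>..s} \<psi> = 0"
    using integral_cong[of "{\<beta>..s}" \<psi> "\<lambda>_. 0"] \<psi>_above by simp
  ultimately show ?thesis by simp
qed

private lemma primitive_bounds: "0 \<le> integral {\<alpha>-1..s} \<psi> \<and> integral {\<alpha>-1..s} \<psi> \<le> integral {\<alpha>-1..\<beta>} \<psi>"
proof -
  have mono: "integral {\<alpha>-1..x} \<psi> \<le> integral {\<alpha>-1..y} \<psi>" if "x \<le> y" for x y
    using primitive_has_derivative \<psi>_nonneg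
    by (intro DERIV_nonneg_imp_nondecreasing[OF that]) blast
  show ?thesis
    using mono[of "min s \<alpha>" s] mono[of s "max s \<beta>"]
      primitive_eq_0[of "min s \<alpha>"] primitive_eq_total[of "max s \<beta>"] by auto
qed

lemma radial_cutoff_nonneg: "0 \<le> radial_cutoff \<psi> \<alpha> \<beta> x"
  and radial_cutoff_le_1: "radial_cutoff \<psi> \<alpha> \<beta> x \<le> 1"
  using primitive_bounds[of "x \<bullet> x"] \<psi>_total by (auto simp: radial_cutoff_def field_simps)

lemma radial_cutoff_eq_1: "x \<bullet> x \<le> \<alpha> \<Longrightarrow> radial_cutoff \<psi> \<alpha> \<beta> x = 1"
  by (simp add: radial_cutoff_def primitive_eq_0)

lemma radial_cutoff_eq_0: "\<beta> \<le> x \<bullet> x \<Longrightarrow> radial_cutoff \<psi> \<alpha> \<beta> x = 0"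
  using \<psi>_total primitive_eq_total[of "x \<bullet> x"] by (simp add: radial_cutoff_def)

private lemma radial_cutoff_eq_comp:
  "radial_cutoff \<psi> \<alpha> \<beta> = (\<lambda>x. (\<lambda>s. 1 + (- 1 / integral {\<alpha>-1..\<beta>} \<psi>) * integral {\<alpha>-1..s} \<psi>) (x \<bullet> x))"
  by (simp add: radial_cutoff_def fun_eq_iff)

lemma C0inf_radial_cutoff: "C0inf (radial_cutoff \<psi> \<alpha> \<beta> :: real^'n::finite \<Rightarrow> real)"
  unfolding C0inf_def
proof
  show "smooth_fun (radial_cutoff \<psi> \<alpha> \<beta> :: real^'n \<Rightarrow> real)"
    unfolding radial_cutoff_eq_comp
    by (intro smooth_fun_comp_inner_self smooth_real_add smooth_real_const smooth_real_cmult
        smooth_real_integral_from \<psi>_smooth \<psi>_below)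
  have "{x. radial_cutoff \<psi> \<alpha> \<beta> x \<noteq> 0} \<subseteq> cball (0::real^'n) (sqrt \<beta>)"
    using radial_cutoff_eq_0 by (force simp: norm_eq_sqrt_inner intro: real_sqrt_le_mono)
  then show "compact (closure {x::real^'n. radial_cutoff \<psi> \<alpha> \<beta> x \<noteq> 0})"
    using bounded_cball bounded_subset compact_closure by blast
qed

lemma Eform_radial_cutoff_le:
  fixes a :: "'n::finite \<Rightarrow> 'n \<Rightarrow> real^'n \<Rightarrow> real" and \<phi> :: "real^'n \<Rightarrow> real"
    and \<Phi> :: "real \<Rightarrow> real" and K :: "(real^'n) set"
  assumes phi_meas: "\<phi> \<in> borel_measurable lebesgue"
    and phi_pos: "AE x in lebesgue. \<phi> x > 0"
    and a_meas: "\<And>i j. a i j \<in> borel_measurable lebesgue"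
    and wd: "form_well_defined a \<phi>"
    and Phi_loc: "\<And>S. compact S \<Longrightarrow> S \<subseteq> - K \<Longrightarrow> set_integrable lebesgue S (\<lambda>x. \<Phi> (norm x))"
    and bound: "\<And>x. x \<notin> K \<Longrightarrow> matnorm a x * \<phi> x \<le> \<Phi> (norm x)"
    and shell_K: "shell \<alpha> \<beta> \<inter> K = {}"
  shows "Eform a \<phi> (radial_cutoff \<psi> \<alpha> \<beta>) (radial_cutoff \<psi> \<alpha> \<beta>) \<le>
    4 / (integral {\<alpha>-1..\<beta>} \<psi>)\<^sup>2 * integral\<^sup>L lebesgue (\<lambda>x::real^'n.
      indicator (shell \<alpha> \<beta>) x * \<Phi> (norm x) * ((\<psi> (x \<bullet> x))\<^sup>2 * (x \<bullet> x)))"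
proof -
  define c where "c = integral {\<alpha>-1..\<beta>} \<psi>"
  define G where "G = (\<lambda>s. 1 + (- 1 / c) * integral {\<alpha>-1..s} \<psi>)"
  have u_eq: "radial_cutoff \<psi> \<alpha> \<beta> = (\<lambda>x::real^'n. G (x \<bullet> x))"
    unfolding radial_cutoff_eq_comp G_def c_def ..
  have "Eform a \<phi> (\<lambda>x. G (x \<bullet> x)) (\<lambda>x. G (x \<bullet> x)) \<le> integral\<^sup>L lebesgue (\<lambda>x::real^'n.
      indicator (shell \<alpha> \<beta>) x * \<Phi> (norm x) * (4 * (- \<psi> (x \<bullet> x) / c)\<^sup>2 * (x \<bullet> x)))"
  proof (rule Eform_comp_inner_self_le[OF phi_meas phi_pos a_meas wd Phi_loc bound shell_K])
    show "C0inf (\<lambda>x::real^'n. G (x \<bullet> x))" using C0inf_radial_cutoff u_eq by metis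
    show "(G has_real_derivative - \<psi> s / c) (at s)" for s
      unfolding G_def using primitive_has_derivative[of s] \<psi>_total
      by (auto intro!: derivative_eq_intros simp: c_def)
    show "continuous_on UNIV (\<lambda>s. - \<psi> s / c)"
      using \<psi>_total by (intro continuous_intros \<psi>_cont) (simp add: c_def)
    show "s \<notin> {\<alpha>..\<beta>} \<Longrightarrow> - \<psi> s / c = 0" for s using \<psi>_below \<psi>_above by (cases "s \<le> \<alpha>") auto
  qed
  also have "\<dots> = 4 / c\<^sup>2 * integral\<^sup>L lebesgue (\<lambda>x::real^'n.
      indicator (shell \<alpha> \<beta>) x * \<Phi> (norm x) * ((\<psi> (x \<bullet> x))\<^sup>2 * (x \<bullet> x)))"
    by (subst integral_mult_right_zero[symmetric], rule Bochner_Integration.integral_cong)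
       (auto simp: power2_eq_square field_simps)
  finally show ?thesis unfolding u_eq c_def .
qed

end

section \<open>The radial weight\<close>

text \<open>The weight is chosen so that \<open>radial_weight d (|x|) dx\<close> is carried to \<open>ds\<close> by \<open>s = |x|\<^sup>2\<close>.\<close>

definition radial_weight :: "nat \<Rightarrow> real \<Rightarrow> real" where
  "radial_weight d r = 2 / (real d * unit_ball_vol (real d) * r ^ (d - 2))"

lemma unit_ball_vol_of_nat_neq_0 [simp]: "unit_ball_vol (real d) \<noteq> 0"
  using unit_ball_vol_pos[of "real d"] by linarith

lemma radial_weight_nonneg: "0 \<le> r \<Longrightarrow> 0 \<le> radial_weight d r"
  by (simp add: radial_weight_def)

lemma radial_weight_pos: "d \<ge> 1 \<Longrightarrow> r > 0 \<Longrightarrow> radial_weight d r > 0"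
  unfolding radial_weight_def by (auto intro!: divide_pos_pos mult_pos_pos)

lemma radial_weight_antimono: "d \<ge> 2 \<Longrightarrow> 0 < r \<Longrightarrow> r \<le> r' \<Longrightarrow> radial_weight d r' \<le> radial_weight d r"
  unfolding radial_weight_def by (intro divide_left_mono mult_left_mono power_mono mult_pos_pos) auto

lemma borel_measurable_radial_weight [measurable]: "radial_weight d \<in> borel_measurable borel"
  unfolding radial_weight_def by measurable

lemma radial_density_mult_radial_weight:
  assumes "d \<ge> 2" "r > 0" shows "radial_density d r * radial_weight d r = 2 * r"
proof -
  have "r ^ (d - 1) = r * r ^ (d - 2)"
    using assms(1) by (metis Suc_diff_Suc Suc_1 diff_Suc_1 less_le_trans lessI power_Suc)
  then show ?thesis using assms unfolding radial_density_def radial_weight_def by (simp add: field_simps)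
qed

lemma nn_integral_radial_weight:
  fixes \<psi> :: "real \<Rightarrow> real"
  assumes d: "DIM('a::euclidean_space) \<ge> 2"
    and \<psi>_cont: "continuous_on UNIV \<psi>" and \<psi>_nonneg: "\<And>s. 0 \<le> \<psi> s"
    and \<psi>_below: "\<And>s. s \<le> a \<Longrightarrow> \<psi> s = 0" and \<psi>_above: "\<And>s. s \<ge> b \<Longrightarrow> \<psi> s = 0"
    and a: "0 < a" "a \<le> b"
  shows "(\<integral>\<^sup>+ x. ennreal (radial_weight DIM('a) (norm (x::'a)) * \<psi> (x \<bullet> x)) \<partial>lborel)
    = (\<integral>\<^sup>+ s. ennreal (\<psi> s) \<partial>lborel)"
proof -
  have [measurable]: "\<psi> \<in> borel_measurable borel" by (rule borel_measurable_continuous_onI[OF \<psi>_cont])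
  have "(\<integral>\<^sup>+ x. ennreal (radial_weight DIM('a) (norm (x::'a)) * \<psi> (x \<bullet> x)) \<partial>lborel)
      = (\<integral>\<^sup>+ x. ennreal (radial_weight DIM('a) (norm (x::'a)) * \<psi> ((norm x)\<^sup>2)) \<partial>lborel)"
    by (simp add: power2_norm_eq_inner)
  also have "\<dots> = (\<integral>\<^sup>+ r. ennreal (radial_density DIM('a) r) *
      ennreal (radial_weight DIM('a) r * \<psi> (r\<^sup>2)) \<partial>lborel)"
    by (rule nn_integral_lborel_norm[where h="\<lambda>r. ennreal (radial_weight DIM('a) r * \<psi> (r\<^sup>2))"])
       (use d in auto)
  also have "\<dots> = (\<integral>\<^sup>+ r. ennreal (\<psi> (r\<^sup>2) * (2 * r) * indicator {0..sqrt b} r) \<partial>lborel)"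
  proof (rule nn_integral_cong)
    fix r :: real
    show "ennreal (radial_density DIM('a) r) * ennreal (radial_weight DIM('a) r * \<psi> (r\<^sup>2))
        = ennreal (\<psi> (r\<^sup>2) * (2 * r) * indicator {0..sqrt b} r)"
    proof (cases "r > 0")
      case True
      have "\<psi> (r\<^sup>2) = 0" if "\<not> r \<le> sqrt b"
        using that True \<psi>_above real_le_rsqrt[of "r"] by (metis less_le_not_le nle_le real_sqrt_le_iff
            real_sqrt_pow2_iff sqrt_le_D)
      then have "ennreal (radial_density DIM('a) r) * ennreal (radial_weight DIM('a) r * \<psi> (r\<^sup>2))
          = ennreal (radial_density DIM('a) r * radial_weight DIM('a) r * \<psi> (r\<^sup>2))"
        using radial_density_nonneg radial_weight_pos[of "DIM('a)" r] True d \<psi>_nonneg[of "r\<^sup>2"]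
        by (subst ennreal_mult[symmetric]) (auto simp: mult.assoc)
      also have "\<dots> = ennreal (\<psi> (r\<^sup>2) * (2 * r) * indicator {0..sqrt b} r)"
        using radial_density_mult_radial_weight[OF d True] True \<open>\<not> r \<le> sqrt b \<Longrightarrow> _\<close>
        by (auto simp: indicator_def mult_ac)
      finally show ?thesis .
    next
      case False
      then have "radial_density DIM('a) r = 0 \<or> r = 0" by (auto simp: radial_density_def)
      moreover have "\<psi> 0 = 0" using \<psi>_below a by auto
      ultimately show ?thesis using False by (auto simp: indicator_def)
    qed
  qed
  also have "\<dots> = (\<integral>\<^sup>+ s. ennreal (\<psi> s * indicator {0\<^sup>2..(sqrt b)\<^sup>2} s) \<partial>lborel)"
    by (rule nn_integral_substitution[where g="\<lambda>r. r\<^sup>2", symmetric])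
       (use a in \<open>auto simp: set_borel_measurable_def intro!: derivative_eq_intros continuous_intros\<close>)
  also have "\<dots> = (\<integral>\<^sup>+ s. ennreal (\<psi> s) \<partial>lborel)"
  proof (rule nn_integral_cong)
    fix s :: real
    have "s \<notin> {0..b} \<Longrightarrow> \<psi> s = 0" using \<psi>_below \<psi>_above a by (cases "s \<le> a") auto
    then show "ennreal (\<psi> s * indicator {0\<^sup>2..(sqrt b)\<^sup>2} s) = ennreal (\<psi> s)"
      using a by (auto simp: indicator_def)
  qed
  finally show ?thesis .
qed

lemma integral_radial_weight:
  fixes \<psi> :: "real \<Rightarrow> real"
  assumes d: "DIM('a::euclidean_space) \<ge> 2"
    and \<psi>_cont: "continuous_on UNIV \<psi>" and \<psi>_nonneg: "\<And>s. 0 \<le> \<psi> s"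
    and \<psi>_below: "\<And>s. s \<le> \<alpha> \<Longrightarrow> \<psi> s = 0" and \<psi>_above: "\<And>s. s \<ge> \<beta> \<Longrightarrow> \<psi> s = 0"
    and \<alpha>: "0 < \<alpha>" "\<alpha> \<le> \<beta>"
  shows "integrable lebesgue (\<lambda>x::'a. radial_weight DIM('a) (norm x) * \<psi> (x \<bullet> x))"
    and "integral {\<alpha>-1..\<beta>} \<psi> = (\<integral>x. radial_weight DIM('a) (norm (x::'a)) * \<psi> (x \<bullet> x) \<partial>lebesgue)"
proof -
  have [measurable]: "(\<lambda>x::'a. \<psi> (x \<bullet> x)) \<in> borel_measurable borel"
    by (intro borel_measurable_continuous_onI continuous_on_compose2[OF \<psi>_cont] continuous_intros) auto
  have "(\<lambda>x::'a. radial_weight DIM('a) (norm x) * \<psi> (x \<bullet> x)) \<in> borel_measurable lborel"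
    by measurable
  then have [measurable]:
    "(\<lambda>x::'a. radial_weight DIM('a) (norm x) * \<psi> (x \<bullet> x)) \<in> borel_measurable lebesgue"
    by (rule measurable_completion)
  have nonneg: "0 \<le> radial_weight DIM('a) (norm x) * \<psi> (x \<bullet> x)" for x :: 'a
    by (simp add: radial_weight_nonneg \<psi>_nonneg)
  have "(\<integral>\<^sup>+ x. ennreal (radial_weight DIM('a) (norm (x::'a)) * \<psi> (x \<bullet> x)) \<partial>lebesgue)
      = (\<integral>\<^sup>+ x. ennreal (radial_weight DIM('a) (norm (x::'a)) * \<psi> (x \<bullet> x)) \<partial>lborel)"
    by (rule nn_integral_completion)
  also have "\<dots> = (\<integral>\<^sup>+ s. ennreal (\<psi> s) \<partial>lborel)"
    by (rule nn_integral_radial_weight[OF d \<psi>_cont \<psi>_nonneg \<psi>_below \<psi>_above \<alpha>])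
  also have "\<dots> = (\<integral>\<^sup>+ s. ennreal (\<psi> s) * indicator {\<alpha>-1..\<beta>} s \<partial>lborel)"
    using \<psi>_below \<psi>_above by (intro nn_integral_cong) (force simp: indicator_def not_le)
  also have "\<dots> = ennreal (integral {\<alpha>-1..\<beta>} \<psi> - integral {\<alpha>-1..\<alpha>-1} \<psi>)"
    by (rule nn_integral_FTC_Icc)
       (use \<alpha> \<psi>_nonneg has_real_derivative_integral_from[OF \<psi>_cont \<psi>_below] in
        \<open>auto intro: borel_measurable_continuous_onI[OF \<psi>_cont]\<close>)
  finally have nn: "(\<integral>\<^sup>+ x. ennreal (radial_weight DIM('a) (norm (x::'a)) * \<psi> (x \<bullet> x)) \<partial>lebesgue)
      = ennreal (integral {\<alpha>-1..\<beta>} \<psi>)" by simp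
  show int: "integrable lebesgue (\<lambda>x::'a. radial_weight DIM('a) (norm x) * \<psi> (x \<bullet> x))"
    using nn nonneg by (intro integrableI_nonneg) auto
  have "integral {\<alpha>-1..\<beta>} \<psi> \<ge> 0"
    using \<psi>_nonneg by (intro integral_nonneg integrable_continuous_real continuous_on_subset[OF \<psi>_cont]) auto
  then show "integral {\<alpha>-1..\<beta>} \<psi> = (\<integral>x. radial_weight DIM('a) (norm (x::'a)) * \<psi> (x \<bullet> x) \<partial>lebesgue)"
    using nn nn_integral_eq_integral[OF int] nonneg by simp
qed

lemma set_integrable_radial_weight_shell:
  assumes d: "DIM('a::euclidean_space) \<ge> 2" and \<alpha>: "0 < \<alpha>"
  shows "set_integrable lebesgue (shell \<alpha> \<beta>) (\<lambda>x::'a. radial_weight DIM('a) (norm x))"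
proof -
  have "integrable lebesgue (\<lambda>x::'a. indicator (shell \<alpha> \<beta>) x * 1 * radial_weight DIM('a) (norm x))"
  proof (rule integrable_indicator_mult_bounded)
    show "set_integrable lebesgue (shell \<alpha> \<beta>) (\<lambda>_::'a. 1::real)"
      using lmeasurable_compact[OF compact_shell] by (simp add: set_integrable_def lmeasurable_iff_integrable)
    show "(\<lambda>x::'a. radial_weight DIM('a) (norm x)) \<in> borel_measurable lebesgue"
      by (rule measurable_completion) measurable
    show "\<bar>radial_weight DIM('a) (norm x)\<bar> \<le> radial_weight DIM('a) (sqrt \<alpha>)" if "x \<in> shell \<alpha> \<beta>" for x :: 'a
      using that d \<alpha> norm_ge_iff_inner[of "sqrt \<alpha>" x]
      by (auto simp: radial_weight_nonneg intro!: radial_weight_antimono)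
  qed
  then show ?thesis by (simp add: set_integrable_def)
qed

section \<open>Smooth approximation of measurable profiles\<close>

lemma continuous_ae_approximation:
  fixes \<theta> :: "'a::euclidean_space \<Rightarrow> real"
  assumes \<theta>_meas: "\<theta> \<in> borel_measurable lebesgue" and \<theta>_bounds: "\<And>s. 0 \<le> \<theta> s \<and> \<theta> s \<le> B"
  obtains h N where "N \<in> null_sets lebesgue" "\<And>n. continuous_on UNIV (h n)"
    "\<And>n s. 0 \<le> h n s \<and> h n s \<le> B" "\<And>s. s \<notin> N \<Longrightarrow> (\<lambda>n. h n s) \<longlonglongrightarrow> \<theta> s"
proof -
  have "\<theta> measurable_on UNIV"
    by (rule lebesgue_measurable_imp_measurable_on[OF \<theta>_meas]) simp
  then obtain N g where N: "negligible N" and g_cont: "\<And>n. continuous_on UNIV (g n)"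
    and g_lim: "\<And>s. s \<notin> N \<Longrightarrow> (\<lambda>n. g n s) \<longlonglongrightarrow> \<theta> s"
    unfolding measurable_on_def by auto
  show ?thesis
  proof
    show "N \<in> null_sets lebesgue" using N by (simp add: negligible_iff_null_sets)
    show "continuous_on UNIV (\<lambda>s. max 0 (min B (g n s)))" for n
      by (intro continuous_intros g_cont)
    show "0 \<le> max 0 (min B (g n s)) \<and> max 0 (min B (g n s)) \<le> B" for n s
      using \<theta>_bounds[of s] by auto
    show "(\<lambda>n. max 0 (min B (g n s))) \<longlonglongrightarrow> \<theta> s" if "s \<notin> N" for s
      using tendsto_max[OF tendsto_const tendsto_min[OF tendsto_const g_lim[OF that]], of 0 B]
        \<theta>_bounds[of s] by simp
  qed
qed

lemma polynomial_ae_approximation: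
  fixes \<theta> :: "real \<Rightarrow> real"
  assumes \<theta>_meas: "\<theta> \<in> borel_measurable lebesgue" and \<theta>_bounds: "\<And>s. 0 \<le> \<theta> s \<and> \<theta> s \<le> B"
  obtains P N where "N \<in> null_sets lebesgue" "\<And>n. real_polynomial_function (P n)"
    "\<And>n s. s \<in> {a..b} \<Longrightarrow> \<bar>P n s\<bar> \<le> B + 1"
    "\<And>s. s \<in> {a..b} - N \<Longrightarrow> (\<lambda>n. P n s) \<longlonglongrightarrow> \<theta> s"
proof -
  obtain N h where N: "N \<in> null_sets lebesgue" and h_cont: "\<And>n. continuous_on UNIV (h n)"
    and h_bounds: "\<And>n s. 0 \<le> h n s \<and> h n s \<le> B" and h_lim: "\<And>s. s \<notin> N \<Longrightarrow> (\<lambda>n. h n s) \<longlonglongrightarrow> \<theta> s"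
    by (rule continuous_ae_approximation[OF \<theta>_meas \<theta>_bounds]) blast
  have "\<exists>p. real_polynomial_function p \<and> (\<forall>s\<in>{a..b}. \<bar>h n s - p s\<bar> < 1 / (real n + 1))" for n
  proof -
    obtain p where "real_polynomial_function p" "\<And>s. s \<in> {a..b} \<Longrightarrow> \<bar>h n s - p s\<bar> < 1 / (real n + 1)"
      by (rule Stone_Weierstrass_real_polynomial_function[OF compact_Icc[of a b]
          continuous_on_subset[OF h_cont[of n] subset_UNIV], of "1 / (real n + 1)"]) auto
    then show ?thesis by blast
  qed
  then obtain P where P: "\<And>n. real_polynomial_function (P n)"
    and P_close: "\<And>n s. s \<in> {a..b} \<Longrightarrow> \<bar>h n s - P n s\<bar> < 1 / (real n + 1)" by metis
  show ?thesis
  proof (rule that[OF N P])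
    fix n s assume "s \<in> {a..b}"
    moreover have "1 / (real n + 1) \<le> 1" by (simp add: divide_le_eq)
    ultimately show "\<bar>P n s\<bar> \<le> B + 1" using P_close[of s n] h_bounds[of n s] by linarith
  next
    fix s assume s: "s \<in> {a..b} - N"
    have "(\<lambda>n. P n s - h n s) \<longlonglongrightarrow> 0"
    proof (rule Lim_null_comparison[where g="\<lambda>n. 1 / (real n + 1)"])
      show "\<forall>\<^sub>F n in sequentially. norm (P n s - h n s) \<le> 1 / (real n + 1)"
        using P_close[of s] s by (auto intro!: always_eventually less_imp_le simp: abs_minus_commute)
      show "(\<lambda>n. 1 / (real n + 1)) \<longlonglongrightarrow> 0"
        using LIMSEQ_inverse_real_of_nat by (simp add: inverse_eq_divide add.commute)
    qed
    from tendsto_add[OF this h_lim[of s]] show "(\<lambda>n. P n s) \<longlonglongrightarrow> \<theta> s" using s by simp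
  qed
qed

text \<open>Approximating \<open>\<surd>(t / bump)\<close> by polynomials \<open>P\<^sub>k\<close> and taking \<open>bump \<cdot> P\<^sub>k\<^sup>2\<close> makes the
  approximants smooth, nonnegative and supported in \<open>[a, b]\<close> at once.\<close>

lemma smooth_ae_approximation:
  fixes t :: "real \<Rightarrow> real"
  assumes t_meas: "t \<in> borel_measurable lebesgue" and t_bounds: "\<And>s. 0 \<le> t s \<and> t s \<le> M"
    and t_support: "\<And>s. s \<notin> {a'..b'} \<Longrightarrow> t s = 0"
    and a: "a < a'" "a' \<le> b'" "b' < b"
  obtains \<psi> :: "nat \<Rightarrow> real \<Rightarrow> real" and N B where "N \<in> null_sets lebesgue"
    "\<And>k. smooth_real (\<psi> k)" "\<And>k s. 0 \<le> \<psi> k s \<and> \<psi> k s \<le> B"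
    "\<And>k s. s \<le> a \<Longrightarrow> \<psi> k s = 0" "\<And>k s. s \<ge> b \<Longrightarrow> \<psi> k s = 0"
    "\<And>s. s \<notin> N \<Longrightarrow> (\<lambda>k. \<psi> k s) \<longlonglongrightarrow> t s"
proof -
  obtain c where c: "c > 0" and bump_ge: "\<And>s. s \<in> {a'..b'} \<Longrightarrow> c \<le> bump a b s"
    using bump_ge_on_Icc[OF a(1,3)] by blast
  define \<theta> where "\<theta> = (\<lambda>s. sqrt (t s / bump a b s))"
  have \<theta>_bounds: "0 \<le> \<theta> s \<and> \<theta> s \<le> sqrt (M / c)" for s
  proof (cases "s \<in> {a'..b'}")
    case True
    have "t s / bump a b s \<le> M / c"
      using bump_ge[OF True] c t_bounds[of s] by (intro frac_le) auto
    then show ?thesis using t_bounds[of s] bump_nonneg[of a b s] by (simp add: \<theta>_def)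
  next
    case False
    then show ?thesis using t_support t_bounds[of s] c by (simp add: \<theta>_def)
  qed
  have "bump a b \<in> borel_measurable lebesgue"
    by (rule borel_measurable_continuous_lebesgue[OF smooth_real_continuous_on[OF smooth_real_bump]])
  then have "\<theta> \<in> borel_measurable lebesgue" unfolding \<theta>_def using t_meas by measurable
  then obtain N P where N: "N \<in> null_sets lebesgue" and P: "\<And>n. real_polynomial_function (P n)"
    and P_bound: "\<And>n s. s \<in> {a..b} \<Longrightarrow> \<bar>P n s\<bar> \<le> sqrt (M / c) + 1"
    and P_lim: "\<And>s. s \<in> {a..b} - N \<Longrightarrow> (\<lambda>n. P n s) \<longlonglongrightarrow> \<theta> s"
    by (rule polynomial_ae_approximation[OF _ \<theta>_bounds]) blast+
  show ?thesis
  proof (rule that[OF N, of "\<lambda>k s. bump a b s * (P k s)\<^sup>2"])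
    show "smooth_real (\<lambda>s. bump a b s * (P k s)\<^sup>2)" for k
      unfolding power2_eq_square by (intro smooth_real_mult smooth_real_bump smooth_real_polynomial P)
    show "0 \<le> bump a b s * (P k s)\<^sup>2 \<and> bump a b s * (P k s)\<^sup>2 \<le> (sqrt (M / c) + 1)\<^sup>2" for k s
    proof (cases "s \<in> {a<..<b}")
      case True
      then have "(P k s)\<^sup>2 \<le> (sqrt (M / c) + 1)\<^sup>2"
        using P_bound[of s k] by (metis abs_ge_zero greaterThanLessThan_iff atLeastAtMost_iff
            less_imp_le power2_abs power_mono)
      then show ?thesis
        using bump_nonneg[of a b s] bump_le_1[of a b s] mult_mono[of "bump a b s" 1] by simp
    qed (simp add: bump_eq_0)
    show "s \<le> a \<Longrightarrow> bump a b s * (P k s)\<^sup>2 = 0" "s \<ge> b \<Longrightarrow> bump a b s * (P k s)\<^sup>2 = 0" for k s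
      by (simp_all add: bump_eq_0)
    show "(\<lambda>k. bump a b s * (P k s)\<^sup>2) \<longlonglongrightarrow> t s" if "s \<notin> N" for s
    proof (cases "s \<in> {a<..<b}")
      case True
      then have "(\<lambda>k. bump a b s * (P k s)\<^sup>2) \<longlonglongrightarrow> bump a b s * (\<theta> s)\<^sup>2"
        using that by (intro tendsto_intros P_lim) auto
      moreover have "bump a b s * (\<theta> s)\<^sup>2 = t s"
        using bump_pos[OF True] t_bounds[of s] by (simp add: \<theta>_def)
      ultimately show ?thesis by simp
    next
      case False
      then have "t s = 0" using a t_support[of s] by force
      then show ?thesis using False by (simp add: bump_eq_0)
    qed
  qed
qed

section \<open>Choosing the shells\<close>

definition a_density :: "(real \<Rightarrow> real) \<Rightarrow> nat \<Rightarrow> 'a::real_normed_vector \<Rightarrow> ennreal" where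
  "a_density \<Phi> d y =
     (if \<Phi> (norm y) = 0 then \<infinity> else ennreal (norm y powr (2 - 2 * real d) / \<Phi> (norm y)))"

lemma a_seq_eq_a_density:
  "a_seq TYPE('n::finite) \<Phi> \<rho> n =
     (\<integral>\<^sup>+ y. indicator (cball (0::real^'n) (real n) - ball 0 \<rho>) y * a_density \<Phi> CARD('n) y \<partial>lebesgue)"
  unfolding a_seq_def a_density_def ..

lemma borel_measurable_indicator_a_density:
  fixes S :: "(real^'n::finite) set"
  assumes "set_integrable lebesgue S (\<lambda>x. \<Phi> (norm x))" and [measurable]: "S \<in> sets lebesgue"
  shows "(\<lambda>y. indicator S y * a_density \<Phi> d y) \<in> borel_measurable lebesgue"
proof -
  define P where "P = (\<lambda>y::real^'n. indicator S y * \<Phi> (norm y))"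
  have [measurable]: "P \<in> borel_measurable lebesgue"
    using assms unfolding set_integrable_def P_def by (auto dest: borel_measurable_integrable)
  have [measurable]: "(\<lambda>y::real^'n. norm y powr c) \<in> borel_measurable lebesgue" for c
    by (rule measurable_completion) measurable
  have "(\<lambda>y. indicator S y * a_density \<Phi> d y) =
      (\<lambda>y. indicator S y * (if P y = 0 then \<infinity> else ennreal (norm y powr (2 - 2 * real d) / P y)))"
    by (auto simp: fun_eq_iff a_density_def P_def indicator_def)
  also have "\<dots> \<in> borel_measurable lebesgue" by measurable
  finally show ?thesis .
qed

text \<open>Where \<open>\<Phi> < 0\<close>, \<open>ennreal\<close> truncates the integrand of \<open>a\<^sub>n\<close> to \<open>0\<close>; the \<open>max 0\<close> on the right
  does the same.\<close>

lemma a_density_eq_radial_weight: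
  fixes y :: "'a::real_inner"
  assumes d: "d \<ge> 2" and y: "y \<noteq> 0" and fin: "a_density \<Phi> d y \<noteq> \<infinity>"
  shows "ennreal (4 / (real d * unit_ball_vol (real d))\<^sup>2) * a_density \<Phi> d y =
    ennreal (radial_weight d (norm y) * max 0 (radial_weight d (norm y) / (\<Phi> (norm y) * (y \<bullet> y))))"
proof -
  define r where "r = norm y"
  define V where "V = unit_ball_vol (real d)"
  have r: "r > 0" and yy: "y \<bullet> y = r\<^sup>2" using y by (simp_all add: r_def power2_norm_eq_inner)
  have V: "V > 0" unfolding V_def by simp
  have \<Phi>: "\<Phi> r \<noteq> 0" using fin by (auto simp: a_density_def r_def)
  have w: "radial_weight d r > 0" using radial_weight_pos[of d r] d r by simp
  show ?thesis
  proof (cases "\<Phi> r > 0")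
    case False
    with \<Phi> have neg: "\<Phi> r < 0" by simp
    have "r powr (2 - 2 * real d) / \<Phi> r \<le> 0"
      using neg by (simp add: divide_nonneg_neg)
    moreover have "radial_weight d r / (\<Phi> r * r\<^sup>2) \<le> 0"
      using neg w r by (intro divide_nonneg_nonpos) (auto simp: mult_neg_pos less_imp_le)
    ultimately show ?thesis using \<Phi>
      by (simp add: a_density_def r_def[symmetric] yy ennreal_eq_0_iff max_absorb1)
  next
    case True
    have exponent: "2 - 2 * real d = - real (2 * d - 2)" using d by (simp add: of_nat_diff)
    have "r powr (2 - 2 * real d) = 1 / r ^ (2 * d - 2)"
      unfolding exponent using r by (simp add: powr_minus powr_realpow divide_inverse)
    moreover have "r ^ (2 * d - 2) = (r ^ (d - 2))\<^sup>2 * r\<^sup>2"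
    proof -
      have "2 * d - 2 = 2 * (d - 2) + 2" using d by simp
      then show ?thesis by (metis power_add power_even_eq)
    qed
    ultimately have "4 / (real d * V)\<^sup>2 * (r powr (2 - 2 * real d) / \<Phi> r) =
        radial_weight d r * (radial_weight d r / (\<Phi> r * r\<^sup>2))"
      using r True V d unfolding radial_weight_def V_def[symmetric] by (simp add: field_simps power2_eq_square)
    moreover have "0 \<le> r powr (2 - 2 * real d) / \<Phi> r" using True by simp
    ultimately show ?thesis using True w V
      by (simp add: a_density_def r_def[symmetric] yy V_def[symmetric] ennreal_mult[symmetric])
  qed
qed

lemma a_seq_shell_bounds:
  fixes \<Phi> :: "real \<Rightarrow> real" and K :: "(real^'n::finite) set" and \<rho> :: real
  assumes Phi_loc: "\<And>S. compact S \<Longrightarrow> S \<subseteq> - K \<Longrightarrow> set_integrable lebesgue S (\<lambda>x. \<Phi> (norm x))"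
    and K_sub: "K \<subseteq> ball 0 \<rho>" and R: "real R > \<rho>"
  shows "a_seq TYPE('n) \<Phi> \<rho> N \<le> a_seq TYPE('n) \<Phi> \<rho> (R + 1) +
      (\<integral>\<^sup>+ y. indicator (shell ((real R + 1)\<^sup>2) ((real N)\<^sup>2)) y * a_density \<Phi> CARD('n) (y::real^'n) \<partial>lebesgue)"
    and "(\<integral>\<^sup>+ y. indicator (shell ((real R + 1)\<^sup>2) ((real N)\<^sup>2)) y * a_density \<Phi> CARD('n) (y::real^'n) \<partial>lebesgue)
      \<le> a_seq TYPE('n) \<Phi> \<rho> N"
proof -
  define S where "S = (\<lambda>n::nat. cball (0::real^'n) (real n) - ball 0 \<rho>)"
  define A where "A = (\<lambda>N::nat. shell ((real R + 1)\<^sup>2) ((real N)\<^sup>2) :: (real^'n) set)"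
  have a_eq: "a_seq TYPE('n) \<Phi> \<rho> n = (\<integral>\<^sup>+ y. indicator (S n) y * a_density \<Phi> CARD('n) y \<partial>lebesgue)" for n
    unfolding a_seq_eq_a_density S_def ..
  have S_compact: "compact (S n)" for n unfolding S_def by (intro compact_diff) auto
  have S_K: "S n \<subseteq> - K" for n using K_sub unfolding S_def by auto
  have A_K: "A N \<subseteq> - K" for N
  proof -
    have "A N \<inter> ball 0 \<rho> \<subseteq> A N \<inter> ball 0 (real R + 1)" using R by auto
    then show ?thesis
      using shell_disjoint_ball[of "real R + 1" "(real R + 1)\<^sup>2" "(real N)\<^sup>2"] K_sub
      unfolding A_def by auto
  qed
  have S_meas: "(\<lambda>y. indicator (S n) y * a_density \<Phi> CARD('n) y) \<in> borel_measurable lebesgue" for n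
    by (rule borel_measurable_indicator_a_density[OF Phi_loc[OF S_compact S_K]])
       (use S_compact in \<open>simp add: compact_imp_closed\<close>)
  have A_meas: "(\<lambda>y. indicator (A n) y * a_density \<Phi> CARD('n) y) \<in> borel_measurable lebesgue" for n
    unfolding A_def by (rule borel_measurable_indicator_a_density[OF Phi_loc[OF compact_shell]])
       (use A_K in \<open>auto simp: A_def\<close>)
  have S_split: "S N \<subseteq> S (R + 1) \<union> A N" for N
    using norm_ge_iff_inner[of "real R + 1"] norm_le_iff_inner[of "real N"]
    unfolding S_def A_def by (force simp: dist_norm)
  show "a_seq TYPE('n) \<Phi> \<rho> N \<le> a_seq TYPE('n) \<Phi> \<rho> (R + 1) +
      (\<integral>\<^sup>+ y. indicator (shell ((real R + 1)\<^sup>2) ((real N)\<^sup>2)) y * a_density \<Phi> CARD('n) (y::real^'n) \<partial>lebesgue)"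
  proof -
    have "a_seq TYPE('n) \<Phi> \<rho> N \<le> (\<integral>\<^sup>+ y. indicator (S (R+1)) y * a_density \<Phi> CARD('n) y
        + indicator (A N) y * a_density \<Phi> CARD('n) y \<partial>lebesgue)"
      unfolding a_eq using S_split[of N] by (intro nn_integral_mono) (auto simp: indicator_def)
    also have "\<dots> = a_seq TYPE('n) \<Phi> \<rho> (R + 1) +
        (\<integral>\<^sup>+ y. indicator (A N) y * a_density \<Phi> CARD('n) y \<partial>lebesgue)"
      unfolding a_eq by (rule nn_integral_add[OF S_meas A_meas])
    finally show ?thesis by (simp add: A_def)
  qed
  have "A N \<subseteq> S N"
    using norm_ge_iff_inner[of "real R + 1"] norm_le_iff_inner[of "real N"] R
    unfolding S_def A_def by (force simp: dist_norm)
  then have "(\<integral>\<^sup>+ y. indicator (A N) y * a_density \<Phi> CARD('n) y \<partial>lebesgue) \<le> a_seq TYPE('n) \<Phi> \<rho> N"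
    unfolding a_eq by (intro nn_integral_mono) (auto simp: indicator_def)
  then show "(\<integral>\<^sup>+ y. indicator (shell ((real R + 1)\<^sup>2) ((real N)\<^sup>2)) y * a_density \<Phi> CARD('n) (y::real^'n) \<partial>lebesgue)
      \<le> a_seq TYPE('n) \<Phi> \<rho> N" by (simp add: A_def)
qed

lemma a_seq_shell_ge:
  fixes \<Phi> :: "real \<Rightarrow> real" and K :: "(real^'n::finite) set" and \<rho> :: real
  assumes Phi_loc: "\<And>S. compact S \<Longrightarrow> S \<subseteq> - K \<Longrightarrow> set_integrable lebesgue S (\<lambda>x. \<Phi> (norm x))"
    and K_sub: "K \<subseteq> ball 0 \<rho>"
    and an_fin: "\<And>n. real n > \<rho> \<Longrightarrow> a_seq TYPE('n) \<Phi> \<rho> n < \<infinity>"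
    and an_lim: "filterlim (a_seq TYPE('n) \<Phi> \<rho>) (nhds \<infinity>) sequentially"
    and R: "real R > \<rho>"
  obtains N :: nat where "N \<ge> R + 2"
    "ennreal L \<le> (\<integral>\<^sup>+ y. indicator (shell ((real R + 1)\<^sup>2) ((real N)\<^sup>2)) y *
       a_density \<Phi> CARD('n) (y::real^'n) \<partial>lebesgue)"
    "(\<integral>\<^sup>+ y. indicator (shell ((real R + 1)\<^sup>2) ((real N)\<^sup>2)) y *
       a_density \<Phi> CARD('n) (y::real^'n) \<partial>lebesgue) < \<infinity>"
proof -
  define I where "I = (\<lambda>N. \<integral>\<^sup>+ y. indicator (shell ((real R + 1)\<^sup>2) ((real N)\<^sup>2)) y *
       a_density \<Phi> CARD('n) (y::real^'n) \<partial>lebesgue)"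
  have a_le: "a_seq TYPE('n) \<Phi> \<rho> N \<le> a_seq TYPE('n) \<Phi> \<rho> (R + 1) + I N"
    and I_le: "I N \<le> a_seq TYPE('n) \<Phi> \<rho> N" for N
    using a_seq_shell_bounds[OF Phi_loc K_sub R] by (simp_all add: I_def)
  have "a_seq TYPE('n) \<Phi> \<rho> (R + 1) + ennreal L < \<infinity>"
    using an_fin[of "R + 1"] R by (simp add: less_top)
  then have "eventually (\<lambda>n. a_seq TYPE('n) \<Phi> \<rho> (R + 1) + ennreal L < a_seq TYPE('n) \<Phi> \<rho> n) sequentially"
    using an_lim by (rule order_tendstoD(1)[rotated])
  then have "eventually (\<lambda>n. a_seq TYPE('n) \<Phi> \<rho> (R + 1) + ennreal L < a_seq TYPE('n) \<Phi> \<rho> n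
      \<and> n \<ge> R + 2) sequentially"
    using eventually_ge_at_top by (rule eventually_conj)
  then obtain N where N: "a_seq TYPE('n) \<Phi> \<rho> (R + 1) + ennreal L < a_seq TYPE('n) \<Phi> \<rho> N" "N \<ge> R + 2"
    unfolding eventually_sequentially by blast
  have "ennreal L \<le> I N"
  proof (rule ccontr)
    assume "\<not> ennreal L \<le> I N"
    then have "a_seq TYPE('n) \<Phi> \<rho> (R + 1) + I N \<le> a_seq TYPE('n) \<Phi> \<rho> (R + 1) + ennreal L"
      by (intro add_left_mono) simp
    with a_le[of N] have "a_seq TYPE('n) \<Phi> \<rho> N \<le> a_seq TYPE('n) \<Phi> \<rho> (R + 1) + ennreal L"
      by (rule order_trans)
    then show False using N(1) by simp
  qed
  moreover have "I N < \<infinity>" using I_le[of N] an_fin[of N] R N(2) by simp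
  ultimately show ?thesis using that N(2) unfolding I_def by blast
qed

section \<open>The optimal radial profile\<close>

lemma mult_truncated_quotient_sq_le:
  fixes w p M :: real
  assumes "0 \<le> w" "0 \<le> M"
  shows "p * (min M (max 0 (w / p)))\<^sup>2 \<le> w * min M (max 0 (w / p))"
proof (cases "p > 0")
  case True
  define \<tau> where "\<tau> = min M (max 0 (w / p))"
  have "0 \<le> \<tau>" "p * \<tau> \<le> w"
    using True assms by (auto simp: \<tau>_def min_def max_def field_simps)
  then have "(p * \<tau>) * \<tau> \<le> w * \<tau>" by (rule mult_right_mono[rotated])
  then show ?thesis by (simp add: \<tau>_def power2_eq_square mult.assoc)
next
  case False
  then have "w / p \<le> 0" using assms by (simp add: divide_nonneg_nonpos)
  then show ?thesis using assms by simp
qed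

lemma nn_integral_truncation_SUP:
  fixes w q :: "'a \<Rightarrow> real"
  assumes [measurable]: "w \<in> borel_measurable M" "q \<in> borel_measurable M"
    and nonneg: "\<And>x. 0 \<le> w x" "\<And>x. 0 \<le> q x"
  shows "(SUP n. \<integral>\<^sup>+ x. ennreal (w x * min (real n) (q x)) \<partial>M) = (\<integral>\<^sup>+ x. ennreal (w x * q x) \<partial>M)"
proof -
  have inc: "incseq (\<lambda>n. ennreal (w x * min (real n) (q x)))" for x
    unfolding incseq_def using nonneg by (auto intro!: ennreal_leI mult_left_mono)
  have "(SUP n. ennreal (w x * min (real n) (q x))) = ennreal (w x * q x)" for x
  proof (rule LIMSEQ_unique[OF LIMSEQ_SUP[OF inc]])
    obtain n0 :: nat where "q x \<le> real n0" using real_arch_simple by blast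
    then have "eventually (\<lambda>n. ennreal (w x * min (real n) (q x)) = ennreal (w x * q x)) sequentially"
      unfolding eventually_sequentially by (auto intro!: exI[of _ n0] simp: min_absorb2)
    then show "(\<lambda>n. ennreal (w x * min (real n) (q x))) \<longlonglongrightarrow> ennreal (w x * q x)"
      by (rule tendsto_eventually)
  qed
  moreover have "incseq (\<lambda>n x. ennreal (w x * min (real n) (q x)))"
    using inc by (auto simp: incseq_def le_fun_def)
  then have "(\<integral>\<^sup>+ x. (SUP n. ennreal (w x * min (real n) (q x))) \<partial>M)
      = (SUP n. \<integral>\<^sup>+ x. ennreal (w x * min (real n) (q x)) \<partial>M)"
    by (rule nn_integral_monotone_convergence_SUP) measurable
  ultimately show ?thesis by simp
qed

lemma exists_truncation_level:
  fixes \<Phi> :: "real \<Rightarrow> real"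
  assumes d: "CARD('n::finite) \<ge> 2" and a': "0 < a'" and L: "0 < L"
    and Phi_int: "set_integrable lebesgue (shell a' b') (\<lambda>x::real^'n. \<Phi> (norm x))"
    and L_le: "ennreal L \<le> (\<integral>\<^sup>+ y. indicator (shell a' b') y * a_density \<Phi> CARD('n) (y::real^'n) \<partial>lebesgue)"
    and fin: "(\<integral>\<^sup>+ y. indicator (shell a' b') y * a_density \<Phi> CARD('n) (y::real^'n) \<partial>lebesgue) < \<infinity>"
  obtains M :: nat where
    "ennreal (4 / (real CARD('n) * unit_ball_vol CARD('n))\<^sup>2 * L / 2) <
      (\<integral>\<^sup>+ x. ennreal (radial_weight CARD('n) (norm (x::real^'n)) * min (real M) (indicator (shell a' b') x *
        max 0 (radial_weight CARD('n) (norm x) / (\<Phi> (norm x) * (x \<bullet> x))))) \<partial>lebesgue)"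
proof -
  define Ann where "Ann = (shell a' b' :: (real^'n) set)"
  define cc where "cc = 4 / (real CARD('n) * unit_ball_vol CARD('n))\<^sup>2"
  define W where "W = (\<lambda>x::real^'n. radial_weight CARD('n) (norm x))"
  define q where "q = (\<lambda>x. indicator Ann x * max 0 (W x / (\<Phi> (norm x) * (x \<bullet> x))))"
  have [measurable]: "W \<in> borel_measurable lebesgue"
    unfolding W_def by (rule measurable_completion) measurable
  have [measurable]: "(\<lambda>x::real^'n. indicator Ann x * \<Phi> (norm x)) \<in> borel_measurable lebesgue"
    using Phi_int unfolding set_integrable_def Ann_def by (auto dest: borel_measurable_integrable)
  have [measurable]: "(\<lambda>x::real^'n. x \<bullet> x) \<in> borel_measurable lebesgue"
    by (rule borel_measurable_continuous_lebesgue) (intro continuous_intros)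
  have [measurable]: "Ann \<in> sets lebesgue" unfolding Ann_def by simp
  have "q = (\<lambda>x. indicator Ann x * max 0 (W x / ((indicator Ann x * \<Phi> (norm x)) * (x \<bullet> x))))"
    by (auto simp: q_def fun_eq_iff indicator_def)
  then have [measurable]: "q \<in> borel_measurable lebesgue" by simp
  have density_meas: "(\<lambda>y. indicator Ann y * a_density \<Phi> CARD('n) y) \<in> borel_measurable lebesgue"
    unfolding Ann_def by (rule borel_measurable_indicator_a_density[OF Phi_int]) simp
  have "AE x in lebesgue. indicator Ann x * a_density \<Phi> CARD('n) x \<noteq> \<infinity>"
    using nn_integral_PInf_AE[OF density_meas] fin unfolding Ann_def by simp
  then have "AE x in lebesgue. ennreal cc * (indicator Ann x * a_density \<Phi> CARD('n) x) = ennreal (W x * q x)"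
  proof eventually_elim
    case (elim x)
    show ?case
    proof (cases "x \<in> Ann")
      case True
      then have "x \<noteq> 0" using a' by (auto simp: Ann_def)
      then show ?thesis using True elim a_density_eq_radial_weight[OF d, of x \<Phi>]
        by (simp add: q_def cc_def W_def)
    qed (simp add: q_def)
  qed
  then have "ennreal cc * (\<integral>\<^sup>+ y. indicator Ann y * a_density \<Phi> CARD('n) y \<partial>lebesgue)
      = (\<integral>\<^sup>+ x. ennreal (W x * q x) \<partial>lebesgue)"
    by (subst nn_integral_cmult[symmetric, OF density_meas]) (rule nn_integral_cong_AE)
  also have "\<dots> = (SUP n. \<integral>\<^sup>+ x. ennreal (W x * min (real n) (q x)) \<partial>lebesgue)"
    by (rule nn_integral_truncation_SUP[symmetric])
       (measurable, measurable, simp add: W_def radial_weight_nonneg, simp add: q_def)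
  finally have SUP_eq: "ennreal cc * (\<integral>\<^sup>+ y. indicator Ann y * a_density \<Phi> CARD('n) y \<partial>lebesgue)
      = (SUP n. \<integral>\<^sup>+ x. ennreal (W x * min (real n) (q x)) \<partial>lebesgue)" .
  have "cc > 0" using d by (simp add: cc_def)
  then have "ennreal (cc * L / 2) < ennreal cc * ennreal L"
    using L by (simp add: ennreal_less_iff ennreal_mult[symmetric])
  also have "\<dots> \<le> (SUP n. \<integral>\<^sup>+ x. ennreal (W x * min (real n) (q x)) \<partial>lebesgue)"
    unfolding SUP_eq[symmetric] using L_le unfolding Ann_def by (rule mult_left_mono) simp
  finally obtain M where "ennreal (cc * L / 2) < (\<integral>\<^sup>+ x. ennreal (W x * min (real M) (q x)) \<partial>lebesgue)"
    by (auto simp: less_SUP_iff)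
  then show ?thesis using that by (simp add: cc_def W_def q_def Ann_def)
qed

lemma truncated_profile:
  fixes \<Phi> :: "real \<Rightarrow> real"
  assumes d: "CARD('n::finite) \<ge> 2" and shells: "0 < \<alpha>" "\<alpha> \<le> a'" "a' \<le> b'" "b' \<le> \<beta>"
    and L: "0 < L"
    and Phi_int: "set_integrable lebesgue (shell \<alpha> \<beta>) (\<lambda>x::real^'n. \<Phi> (norm x))"
    and L_le: "ennreal L \<le> (\<integral>\<^sup>+ y. indicator (shell a' b') y * a_density \<Phi> CARD('n) (y::real^'n) \<partial>lebesgue)"
    and fin: "(\<integral>\<^sup>+ y. indicator (shell a' b') y * a_density \<Phi> CARD('n) (y::real^'n) \<partial>lebesgue) < \<infinity>"
  obtains t M where "t \<in> borel_measurable lebesgue"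
    "(\<lambda>x::real^'n. t (x \<bullet> x)) \<in> borel_measurable lebesgue" "\<And>s. 0 \<le> t s \<and> t s \<le> M"
    "\<And>s. s \<notin> {a'..b'} \<Longrightarrow> t s = 0"
    "4 / (real CARD('n) * unit_ball_vol CARD('n))\<^sup>2 * L / 2 <
       (\<integral>x. radial_weight CARD('n) (norm (x::real^'n)) * t (x \<bullet> x) \<partial>lebesgue)"
    "(\<integral>x. indicator (shell \<alpha> \<beta>) x * \<Phi> (norm (x::real^'n)) * ((t (x \<bullet> x))\<^sup>2 * (x \<bullet> x)) \<partial>lebesgue)
       \<le> (\<integral>x. radial_weight CARD('n) (norm (x::real^'n)) * t (x \<bullet> x) \<partial>lebesgue)"
proof -
  define Ann where "Ann = (shell a' b' :: (real^'n) set)"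
  define W where "W = (\<lambda>x::real^'n. radial_weight CARD('n) (norm x))"
  define cc where "cc = 4 / (real CARD('n) * unit_ball_vol CARD('n))\<^sup>2"
  have Ann_sub: "Ann \<subseteq> shell \<alpha> \<beta>" using shells by (auto simp: Ann_def)
  have Phi_Ann: "set_integrable lebesgue Ann (\<lambda>x. \<Phi> (norm x))"
    using Ann_sub by (intro set_integrable_subset[OF Phi_int]) (auto simp: Ann_def)
  obtain M :: nat where M: "ennreal (cc * L / 2) < (\<integral>\<^sup>+ x. ennreal (W x * min (real M) (indicator Ann x *
      max 0 (W x / (\<Phi> (norm x) * (x \<bullet> x))))) \<partial>lebesgue)"
    using exists_truncation_level[OF d _ L Phi_Ann[unfolded Ann_def] L_le fin] shells
    unfolding cc_def W_def Ann_def by auto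
  define t where "t = (\<lambda>s. min (real M) (indicator {a'..b'} s *
      max 0 (radial_weight CARD('n) (sqrt s) / (\<Phi> (sqrt s) * s))))"
  have t_bounds: "0 \<le> t s \<and> t s \<le> real M" for s by (auto simp: t_def indicator_def)
  have t_support: "s \<notin> {a'..b'} \<Longrightarrow> t s = 0" for s by (simp add: t_def)
  have T_eq: "t (x \<bullet> x) = min (real M) (indicator Ann x * max 0 (W x / (\<Phi> (norm x) * (x \<bullet> x))))"
    for x by (simp add: t_def W_def Ann_def norm_eq_sqrt_inner indicator_def)
  have [measurable]: "Ann \<in> sets lebesgue" unfolding Ann_def by simp
  have [measurable]: "W \<in> borel_measurable lebesgue"
    unfolding W_def by (rule measurable_completion) measurable
  have [measurable]: "(\<lambda>x::real^'n. indicator Ann x * \<Phi> (norm x)) \<in> borel_measurable lebesgue"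
    using Phi_Ann unfolding set_integrable_def by (auto dest: borel_measurable_integrable)
  have [measurable]: "(\<lambda>x::real^'n. x \<bullet> x) \<in> borel_measurable lebesgue"
    by (rule borel_measurable_continuous_lebesgue) (intro continuous_intros)
  have "(\<lambda>x. t (x \<bullet> x)) = (\<lambda>x. min (real M) (indicator Ann x * max 0 (W x /
      ((indicator Ann x * \<Phi> (norm x)) * (x \<bullet> x)))))"
    by (auto simp: T_eq fun_eq_iff indicator_def)
  then have T_meas [measurable]: "(\<lambda>x::real^'n. t (x \<bullet> x)) \<in> borel_measurable lebesgue" by simp
  have t_meas: "t \<in> borel_measurable lebesgue"
    by (rule borel_measurable_of_comp_inner_self[OF _ _ t_support _ T_meas]) (use d shells t_bounds in auto)
  have "integrable lebesgue (\<lambda>x. indicator Ann x * W x * t (x \<bullet> x))"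
    using set_integrable_radial_weight_shell[where 'a="real^'n", of a' b'] d shells t_bounds
    by (intro integrable_indicator_mult_bounded[where B="real M"]) (auto simp: W_def Ann_def)
  moreover have "(\<lambda>x. indicator Ann x * W x * t (x \<bullet> x)) = (\<lambda>x. W x * t (x \<bullet> x))"
    by (rule ext) (simp add: T_eq indicator_def)
  ultimately have WT_int: "integrable lebesgue (\<lambda>x. W x * t (x \<bullet> x))" by simp
  have WT_nonneg: "0 \<le> W x * t (x \<bullet> x)" for x
    using t_bounds by (simp add: W_def radial_weight_nonneg)
  have "ennreal (cc * L / 2) < ennreal (\<integral>x. W x * t (x \<bullet> x) \<partial>lebesgue)"
    using M nn_integral_eq_integral[OF WT_int] WT_nonneg by (simp add: T_eq)
  then have m: "cc * L / 2 < (\<integral>x. W x * t (x \<bullet> x) \<partial>lebesgue)"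
    by (rule ennreal_less_iff[THEN iffD1, rotated]) (use L d in \<open>simp add: cc_def\<close>)
  have energy_int: "integrable lebesgue (\<lambda>x::real^'n. indicator (shell \<alpha> \<beta>) x * \<Phi> (norm x) * ((t (x \<bullet> x))\<^sup>2 * (x \<bullet> x)))"
    by (rule integrable_indicator_mult_bounded[OF Phi_int, where B="(real M)\<^sup>2 * \<beta>"])
       (use t_bounds in \<open>auto intro!: mult_mono power_mono\<close>)
  have "(\<integral>x. indicator (shell \<alpha> \<beta>) x * \<Phi> (norm (x::real^'n)) * ((t (x \<bullet> x))\<^sup>2 * (x \<bullet> x)) \<partial>lebesgue)
      \<le> (\<integral>x. W x * t (x \<bullet> x) \<partial>lebesgue)"
  proof (rule integral_mono[OF energy_int WT_int])
    fix x :: "real^'n"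
    show "indicator (shell \<alpha> \<beta>) x * \<Phi> (norm x) * ((t (x \<bullet> x))\<^sup>2 * (x \<bullet> x)) \<le> W x * t (x \<bullet> x)"
    proof (cases "x \<in> Ann")
      case True
      then show ?thesis
        using Ann_sub mult_truncated_quotient_sq_le[of "W x" "real M" "\<Phi> (norm x) * (x \<bullet> x)"]
        by (auto simp: T_eq W_def radial_weight_nonneg mult_ac)
    qed (simp add: T_eq)
  qed
  then show ?thesis
    using that[OF t_meas T_meas t_bounds t_support] m unfolding W_def cc_def by blast
qed

lemma tendsto_integral_shell_comp:
  fixes h :: "'a::euclidean_space \<Rightarrow> real" and G t :: "real \<Rightarrow> real" and \<psi> :: "nat \<Rightarrow> real \<Rightarrow> real"
  assumes d: "DIM('a) \<ge> 1" and \<alpha>: "0 < \<alpha>"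
    and h: "set_integrable lebesgue (shell \<alpha> \<beta>) h" and G: "continuous_on UNIV G"
    and \<psi>_cont: "\<And>k. continuous_on UNIV (\<psi> k)"
    and t_meas: "(\<lambda>x::'a. t (x \<bullet> x)) \<in> borel_measurable lebesgue"
    and bounds: "\<And>k s. \<bar>\<psi> k s\<bar> \<le> B" "\<And>s. \<bar>t s\<bar> \<le> B"
    and N: "N \<in> null_sets lebesgue" and conv: "\<And>s. s \<notin> N \<Longrightarrow> (\<lambda>k. \<psi> k s) \<longlonglongrightarrow> t s"
  shows "(\<lambda>k. \<integral>x. indicator (shell \<alpha> \<beta>) x * h x * G (\<psi> k (x \<bullet> x)) \<partial>lebesgue)
    \<longlonglongrightarrow> (\<integral>x. indicator (shell \<alpha> \<beta>) x * h x * G (t (x \<bullet> x)) \<partial>lebesgue)"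
proof -
  obtain C where C: "\<And>s. s \<in> {-B..B} \<Longrightarrow> \<bar>G s\<bar> \<le> C"
    using compact_imp_bounded[OF compact_continuous_image[OF continuous_on_subset[OF G subset_UNIV]
          compact_Icc[of "-B" B]]] unfolding bounded_iff by (metis imageI real_norm_def)
  have h_int: "integrable lebesgue (\<lambda>x. indicator (shell \<alpha> \<beta>) x * h x)"
    using h by (simp add: set_integrable_def)
  have [measurable]: "(\<lambda>x. indicator (shell \<alpha> \<beta>) x * h x) \<in> borel_measurable lebesgue"
    using h_int by (rule borel_measurable_integrable)
  have "(\<lambda>x::'a. \<psi> k (x \<bullet> x)) \<in> borel_measurable lebesgue" for k
    by (rule borel_measurable_continuous_lebesgue)
       (intro continuous_on_compose2[OF \<psi>_cont] continuous_intros, auto)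
  then have [measurable]: "(\<lambda>x::'a. G (\<psi> k (x \<bullet> x))) \<in> borel_measurable lebesgue" for k
    by (rule borel_measurable_continuous_on[OF G])
  have [measurable]: "(\<lambda>x::'a. G (t (x \<bullet> x))) \<in> borel_measurable lebesgue"
    by (rule borel_measurable_continuous_on[OF G t_meas])
  have G_conv: "(\<lambda>k. G (\<psi> k s)) \<longlonglongrightarrow> G (t s)" if "s \<notin> N" for s
    using continuous_on_tendsto_compose[OF G conv[OF that]] by simp
  have lim: "(\<lambda>k. indicator (shell \<alpha> \<beta>) x * h x * G (\<psi> k (x \<bullet> x)))
      \<longlonglongrightarrow> indicator (shell \<alpha> \<beta>) x * h x * G (t (x \<bullet> x))"
    if "x \<notin> {x::'a. x \<bullet> x \<in> N \<inter> {\<alpha>..\<beta>}}" for x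
  proof (cases "x \<in> shell \<alpha> \<beta>")
    case True
    then show ?thesis using that by (intro tendsto_mult_left G_conv) auto
  qed simp
  have "{x::'a. x \<bullet> x \<in> N \<inter> {\<alpha>..\<beta>}} \<in> null_sets lebesgue"
    by (rule null_sets_inner_self_preimage[OF d N \<alpha>])
  then have "AE x in lebesgue. (\<lambda>k. indicator (shell \<alpha> \<beta>) x * h x * G (\<psi> k (x \<bullet> x)))
      \<longlonglongrightarrow> indicator (shell \<alpha> \<beta>) x * h x * G (t (x \<bullet> x))"
    by (rule AE_I') (use lim in blast)
  moreover have "AE x in lebesgue. norm (indicator (shell \<alpha> \<beta>) x * h x * G (\<psi> k (x \<bullet> x)))
      \<le> C * \<bar>indicator (shell \<alpha> \<beta>) x * h x\<bar>" for k
  proof (intro AE_I2)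
    fix x :: 'a
    have "\<bar>G (\<psi> k (x \<bullet> x))\<bar> \<le> C" using C bounds(1)[of k "x \<bullet> x"] by (simp add: abs_le_iff)
    then show "norm (indicator (shell \<alpha> \<beta>) x * h x * G (\<psi> k (x \<bullet> x)))
        \<le> C * \<bar>indicator (shell \<alpha> \<beta>) x * h x\<bar>"
      by (simp add: abs_mult mult.commute mult_right_mono)
  qed
  ultimately show ?thesis
    by (intro integral_dominated_convergence[where w="\<lambda>x. C * \<bar>indicator (shell \<alpha> \<beta>) x * h x\<bar>"])
       (auto intro: integrable_mult_right integrable_abs h_int)
qed

lemma smooth_profiles_tendsto:
  fixes \<Phi> t :: "real \<Rightarrow> real"
  assumes d: "CARD('n::finite) \<ge> 2" and shells: "0 < \<alpha>" "\<alpha> < a'" "a' \<le> b'" "b' < \<beta>"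
    and Phi_int: "set_integrable lebesgue (shell \<alpha> \<beta>) (\<lambda>x::real^'n. \<Phi> (norm x))"
    and t_meas: "t \<in> borel_measurable lebesgue"
    and T_meas: "(\<lambda>x::real^'n. t (x \<bullet> x)) \<in> borel_measurable lebesgue"
    and t_bounds: "\<And>s. 0 \<le> t s \<and> t s \<le> M" and t_support: "\<And>s. s \<notin> {a'..b'} \<Longrightarrow> t s = 0"
  obtains \<psi> :: "nat \<Rightarrow> real \<Rightarrow> real" where "\<And>k. smooth_real (\<psi> k)" "\<And>k s. 0 \<le> \<psi> k s"
    "\<And>k s. s \<le> \<alpha> \<Longrightarrow> \<psi> k s = 0" "\<And>k s. \<beta> \<le> s \<Longrightarrow> \<psi> k s = 0"
    "(\<lambda>k. \<integral>x. radial_weight CARD('n) (norm (x::real^'n)) * \<psi> k (x \<bullet> x) \<partial>lebesgue)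
       \<longlonglongrightarrow> (\<integral>x. radial_weight CARD('n) (norm (x::real^'n)) * t (x \<bullet> x) \<partial>lebesgue)"
    "(\<lambda>k. \<integral>x. indicator (shell \<alpha> \<beta>) x * \<Phi> (norm (x::real^'n)) * ((\<psi> k (x \<bullet> x))\<^sup>2 * (x \<bullet> x)) \<partial>lebesgue)
       \<longlonglongrightarrow> (\<integral>x. indicator (shell \<alpha> \<beta>) x * \<Phi> (norm (x::real^'n)) * ((t (x \<bullet> x))\<^sup>2 * (x \<bullet> x)) \<partial>lebesgue)"
proof -
  define A where "A = (shell \<alpha> \<beta> :: (real^'n) set)"
  define W where "W = (\<lambda>x::real^'n. radial_weight CARD('n) (norm x))"
  obtain N B and \<psi> :: "nat \<Rightarrow> real \<Rightarrow> real" where N: "N \<in> null_sets lebesgue"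
    and \<psi>_smooth: "\<And>k. smooth_real (\<psi> k)" and \<psi>_bounds: "\<And>k s. 0 \<le> \<psi> k s \<and> \<psi> k s \<le> B"
    and \<psi>_below: "\<And>k s. s \<le> \<alpha> \<Longrightarrow> \<psi> k s = 0" and \<psi>_above: "\<And>k s. s \<ge> \<beta> \<Longrightarrow> \<psi> k s = 0"
    and \<psi>_lim: "\<And>s. s \<notin> N \<Longrightarrow> (\<lambda>k. \<psi> k s) \<longlonglongrightarrow> t s"
    using smooth_ae_approximation[OF t_meas t_bounds t_support shells(2-4)] by metis
  have \<psi>_cont: "continuous_on UNIV (\<psi> k)" for k by (rule smooth_real_continuous_on[OF \<psi>_smooth])
  have t_le: "t s \<le> max B M" and \<psi>_le: "\<psi> k s \<le> max B M" for k s
    using t_bounds[of s] \<psi>_bounds[of k s] by auto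
  have off_shell: "\<psi> k (x \<bullet> x) = 0" "t (x \<bullet> x) = 0" if "x \<notin> A" for k x
    using that shells \<psi>_below[of "x \<bullet> x" k] \<psi>_above[of "x \<bullet> x" k] t_support[of "x \<bullet> x"]
    by (force simp: A_def)+
  have dims: "DIM(real^'n) \<ge> 1" using d by simp
  note conv = tendsto_integral_shell_comp[OF dims shells(1) _ _ \<psi>_cont T_meas _ _ N \<psi>_lim, of \<beta>]
  have "set_integrable lebesgue A W"
    using set_integrable_radial_weight_shell[where 'a="real^'n", of \<alpha> \<beta>] d shells
    by (simp add: A_def W_def)
  from conv[where h=W and G="\<lambda>s. s" and B="max B M"] this t_le \<psi>_le t_bounds \<psi>_bounds
  have "(\<lambda>k. \<integral>x. indicator A x * W x * \<psi> k (x \<bullet> x) \<partial>lebesgue) \<longlonglongrightarrow> (\<integral>x. indicator A x * W x * t (x \<bullet> x) \<partial>lebesgue)"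
    by (auto simp: A_def)
  moreover have "indicator A x * W x * \<psi> k (x \<bullet> x) = W x * \<psi> k (x \<bullet> x)"
    "indicator A x * W x * t (x \<bullet> x) = W x * t (x \<bullet> x)" for k x
    using off_shell[of x] by (auto simp: indicator_def)
  ultimately have lim1: "(\<lambda>k. \<integral>x. W x * \<psi> k (x \<bullet> x) \<partial>lebesgue) \<longlonglongrightarrow> (\<integral>x. W x * t (x \<bullet> x) \<partial>lebesgue)"
    by simp
  have "integrable lebesgue (\<lambda>x. indicator A x * \<Phi> (norm x) * (x \<bullet> x))"
    using Phi_int unfolding A_def
    by (rule integrable_indicator_mult_bounded[where B=\<beta>])
       (auto intro!: borel_measurable_continuous_lebesgue continuous_intros)
  then have "set_integrable lebesgue A (\<lambda>x. \<Phi> (norm x) * (x \<bullet> x))"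
    by (simp add: set_integrable_def mult.assoc)
  moreover have "continuous_on UNIV (\<lambda>s::real. s\<^sup>2)" by (intro continuous_intros)
  ultimately have "set_integrable lebesgue A (\<lambda>x. \<Phi> (norm x) * (x \<bullet> x))"
    "continuous_on UNIV (\<lambda>s::real. s\<^sup>2)" .
  from conv[where h="\<lambda>x. \<Phi> (norm x) * (x \<bullet> x)" and G="\<lambda>s. s\<^sup>2" and B="max B M"] this t_le \<psi>_le
    t_bounds \<psi>_bounds
  have "(\<lambda>k. \<integral>x. indicator A x * (\<Phi> (norm x) * (x \<bullet> x)) * (\<psi> k (x \<bullet> x))\<^sup>2 \<partial>lebesgue)
      \<longlonglongrightarrow> (\<integral>x. indicator A x * (\<Phi> (norm x) * (x \<bullet> x)) * (t (x \<bullet> x))\<^sup>2 \<partial>lebesgue)"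
    by (auto simp: A_def)
  then have lim2: "(\<lambda>k. \<integral>x. indicator A x * \<Phi> (norm x) * ((\<psi> k (x \<bullet> x))\<^sup>2 * (x \<bullet> x)) \<partial>lebesgue)
      \<longlonglongrightarrow> (\<integral>x. indicator A x * \<Phi> (norm x) * ((t (x \<bullet> x))\<^sup>2 * (x \<bullet> x)) \<partial>lebesgue)"
    by (simp add: mult_ac)
  show ?thesis
    using \<psi>_smooth \<psi>_bounds \<psi>_below \<psi>_above lim1 lim2 unfolding W_def A_def
    by (intro that[of \<psi>]) auto
qed

lemma smooth_profile:
  fixes \<Phi> t :: "real \<Rightarrow> real"
  assumes d: "CARD('n::finite) \<ge> 2" and shells: "0 < \<alpha>" "\<alpha> < a'" "a' \<le> b'" "b' < \<beta>"
    and Phi_int: "set_integrable lebesgue (shell \<alpha> \<beta>) (\<lambda>x::real^'n. \<Phi> (norm x))"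
    and t_meas: "t \<in> borel_measurable lebesgue"
    and T_meas: "(\<lambda>x::real^'n. t (x \<bullet> x)) \<in> borel_measurable lebesgue"
    and t_bounds: "\<And>s. 0 \<le> t s \<and> t s \<le> M" and t_support: "\<And>s. s \<notin> {a'..b'} \<Longrightarrow> t s = 0"
    and energy: "(\<integral>x. indicator (shell \<alpha> \<beta>) x * \<Phi> (norm (x::real^'n)) * ((t (x \<bullet> x))\<^sup>2 * (x \<bullet> x)) \<partial>lebesgue)
       \<le> (\<integral>x. radial_weight CARD('n) (norm (x::real^'n)) * t (x \<bullet> x) \<partial>lebesgue)"
    and m_pos: "0 < (\<integral>x. radial_weight CARD('n) (norm (x::real^'n)) * t (x \<bullet> x) \<partial>lebesgue)"
  obtains \<psi> where "smooth_real \<psi>" "\<And>s. 0 \<le> \<psi> s" "\<And>s. s \<le> \<alpha> \<Longrightarrow> \<psi> s = 0" "\<And>s. \<beta> \<le> s \<Longrightarrow> \<psi> s = 0"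
    "(\<integral>x. radial_weight CARD('n) (norm (x::real^'n)) * t (x \<bullet> x) \<partial>lebesgue) / 2
       < (\<integral>x. radial_weight CARD('n) (norm (x::real^'n)) * \<psi> (x \<bullet> x) \<partial>lebesgue)"
    "(\<integral>x. indicator (shell \<alpha> \<beta>) x * \<Phi> (norm (x::real^'n)) * ((\<psi> (x \<bullet> x))\<^sup>2 * (x \<bullet> x)) \<partial>lebesgue)
       < 2 * (\<integral>x. radial_weight CARD('n) (norm (x::real^'n)) * t (x \<bullet> x) \<partial>lebesgue)"
proof -
  define A where "A = (shell \<alpha> \<beta> :: (real^'n) set)"
  define W where "W = (\<lambda>x::real^'n. radial_weight CARD('n) (norm x))"
  define m where "m = (\<integral>x. W x * t (x \<bullet> x) \<partial>lebesgue)"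
  obtain \<psi> :: "nat \<Rightarrow> real \<Rightarrow> real" where \<psi>_smooth: "\<And>k. smooth_real (\<psi> k)"
    and \<psi>_nonneg: "\<And>k s. 0 \<le> \<psi> k s"
    and \<psi>_below: "\<And>k s. s \<le> \<alpha> \<Longrightarrow> \<psi> k s = 0" and \<psi>_above: "\<And>k s. \<beta> \<le> s \<Longrightarrow> \<psi> k s = 0"
    and lim1: "(\<lambda>k. \<integral>x. radial_weight CARD('n) (norm (x::real^'n)) * \<psi> k (x \<bullet> x) \<partial>lebesgue)
       \<longlonglongrightarrow> (\<integral>x. radial_weight CARD('n) (norm (x::real^'n)) * t (x \<bullet> x) \<partial>lebesgue)"
    and lim2: "(\<lambda>k. \<integral>x. indicator (shell \<alpha> \<beta>) x * \<Phi> (norm (x::real^'n)) * ((\<psi> k (x \<bullet> x))\<^sup>2 * (x \<bullet> x)) \<partial>lebesgue)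
       \<longlonglongrightarrow> (\<integral>x. indicator (shell \<alpha> \<beta>) x * \<Phi> (norm (x::real^'n)) * ((t (x \<bullet> x))\<^sup>2 * (x \<bullet> x)) \<partial>lebesgue)"
    using smooth_profiles_tendsto[OF d shells Phi_int t_meas T_meas t_bounds t_support] by blast
  have lim1: "(\<lambda>k. \<integral>x. W x * \<psi> k (x \<bullet> x) \<partial>lebesgue) \<longlonglongrightarrow> m"
    using lim1 by (simp add: W_def m_def)
  note lim2 = lim2[folded A_def]
  have m_pos': "0 < m" using m_pos by (simp add: m_def W_def)
  have "eventually (\<lambda>k. m / 2 < (\<integral>x. W x * \<psi> k (x \<bullet> x) \<partial>lebesgue)) sequentially"
    by (rule order_tendstoD(1)[OF lim1]) (use m_pos' in simp)
  moreover have "eventually (\<lambda>k. (\<integral>x. indicator A x * \<Phi> (norm x) * ((\<psi> k (x \<bullet> x))\<^sup>2 * (x \<bullet> x)) \<partial>lebesgue)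
      < 2 * m) sequentially"
    by (rule order_tendstoD(2)[OF lim2]) (use energy m_pos' in \<open>simp add: A_def m_def W_def\<close>)
  ultimately have "eventually (\<lambda>k. m / 2 < (\<integral>x. W x * \<psi> k (x \<bullet> x) \<partial>lebesgue) \<and>
      (\<integral>x. indicator A x * \<Phi> (norm x) * ((\<psi> k (x \<bullet> x))\<^sup>2 * (x \<bullet> x)) \<partial>lebesgue) < 2 * m)
      sequentially"
    by (rule eventually_conj)
  then obtain k where "m / 2 < (\<integral>x. W x * \<psi> k (x \<bullet> x) \<partial>lebesgue)"
    "(\<integral>x. indicator A x * \<Phi> (norm x) * ((\<psi> k (x \<bullet> x))\<^sup>2 * (x \<bullet> x)) \<partial>lebesgue) < 2 * m"
    unfolding eventually_sequentially by blast
  then show ?thesis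
    using that[OF \<psi>_smooth[of k]] \<psi>_nonneg \<psi>_below \<psi>_above unfolding m_def W_def A_def by blast
qed

lemma exists_smooth_profile:
  fixes \<Phi> :: "real \<Rightarrow> real"
  assumes d: "CARD('n::finite) \<ge> 2" and shells: "0 < \<alpha>" "\<alpha> < a'" "a' \<le> b'" "b' < \<beta>"
    and L: "0 < L"
    and Phi_int: "set_integrable lebesgue (shell \<alpha> \<beta>) (\<lambda>x::real^'n. \<Phi> (norm x))"
    and L_le: "ennreal L \<le> (\<integral>\<^sup>+ y. indicator (shell a' b') y * a_density \<Phi> CARD('n) (y::real^'n) \<partial>lebesgue)"
    and fin: "(\<integral>\<^sup>+ y. indicator (shell a' b') y * a_density \<Phi> CARD('n) (y::real^'n) \<partial>lebesgue) < \<infinity>"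
  obtains \<psi> where "smooth_real \<psi>" "\<And>s. 0 \<le> \<psi> s" "\<And>s. s \<le> \<alpha> \<Longrightarrow> \<psi> s = 0" "\<And>s. \<beta> \<le> s \<Longrightarrow> \<psi> s = 0"
    "4 / (real CARD('n) * unit_ball_vol (real CARD('n)))\<^sup>2 * L / 4 < integral {\<alpha>-1..\<beta>} \<psi>"
    "(\<integral>x. indicator (shell \<alpha> \<beta>) x * \<Phi> (norm (x::real^'n)) * ((\<psi> (x \<bullet> x))\<^sup>2 * (x \<bullet> x)) \<partial>lebesgue)
       < 4 * integral {\<alpha>-1..\<beta>} \<psi>"
proof -
  define cc where "cc = 4 / (real CARD('n) * unit_ball_vol (real CARD('n)))\<^sup>2"
  define W where "W = (\<lambda>x::real^'n. radial_weight CARD('n) (norm x))"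
  have cc: "cc > 0" using d by (simp add: cc_def)
  obtain t M where t_meas: "t \<in> borel_measurable lebesgue"
    and T_meas: "(\<lambda>x::real^'n. t (x \<bullet> x)) \<in> borel_measurable lebesgue"
    and t_bounds: "\<And>s. 0 \<le> t s \<and> t s \<le> M" and t_support: "\<And>s. s \<notin> {a'..b'} \<Longrightarrow> t s = 0"
    and m_gt: "cc * L / 2 < (\<integral>x. W x * t (x \<bullet> x) \<partial>lebesgue)"
    and energy: "(\<integral>x. indicator (shell \<alpha> \<beta>) x * \<Phi> (norm (x::real^'n)) * ((t (x \<bullet> x))\<^sup>2 * (x \<bullet> x)) \<partial>lebesgue)
       \<le> (\<integral>x. W x * t (x \<bullet> x) \<partial>lebesgue)"
    unfolding cc_def W_def
    by (rule truncated_profile[OF d shells(1) less_imp_le[OF shells(2)] shells(3) less_imp_le[OF shells(4)]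
        L Phi_int L_le fin]) blast
  define m where "m = (\<integral>x. W x * t (x \<bullet> x) \<partial>lebesgue)"
  have m: "0 < cc * L / 2" "cc * L / 2 < m" using cc L m_gt by (simp_all add: m_def)
  obtain \<psi> where \<psi>_smooth: "smooth_real \<psi>" and \<psi>_nonneg: "\<And>s. 0 \<le> \<psi> s"
    and \<psi>_below: "\<And>s. s \<le> \<alpha> \<Longrightarrow> \<psi> s = 0" and \<psi>_above: "\<And>s. \<beta> \<le> s \<Longrightarrow> \<psi> s = 0"
    and c_gt: "m / 2 < (\<integral>x. W x * \<psi> (x \<bullet> x) \<partial>lebesgue)"
    and energy_\<psi>: "(\<integral>x. indicator (shell \<alpha> \<beta>) x * \<Phi> (norm (x::real^'n)) * ((\<psi> (x \<bullet> x))\<^sup>2 * (x \<bullet> x)) \<partial>lebesgue) < 2 * m"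
    unfolding m_def W_def
    by (rule smooth_profile[OF d shells Phi_int t_meas T_meas t_bounds t_support energy[unfolded W_def]])
       (use m in \<open>simp_all add: m_def W_def\<close>)
  have dim': "DIM(real^'n) \<ge> 2" using d by simp
  have "\<alpha> \<le> \<beta>" using shells(2-4) by linarith
  then have "integral {\<alpha>-1..\<beta>} \<psi> = (\<integral>x. W x * \<psi> (x \<bullet> x) \<partial>lebesgue)"
    using integral_radial_weight(2)[OF dim' smooth_real_continuous_on[OF \<psi>_smooth] \<psi>_nonneg \<psi>_below
        \<psi>_above shells(1)] by (simp add: W_def)
  then have "m / 2 < integral {\<alpha>-1..\<beta>} \<psi>" using c_gt by simp
  then show ?thesis
    using that[OF \<psi>_smooth \<psi>_nonneg \<psi>_below \<psi>_above] m energy_\<psi> unfolding cc_def by fastforce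
qed

lemma small_energy_cutoff:
  fixes a :: "'n::finite \<Rightarrow> 'n \<Rightarrow> real^'n \<Rightarrow> real" and \<phi> :: "real^'n \<Rightarrow> real"
    and \<Phi> :: "real \<Rightarrow> real" and K :: "(real^'n) set" and R N :: nat and L \<rho> :: real
  assumes d: "CARD('n) \<ge> 2"
    and phi_meas: "\<phi> \<in> borel_measurable lebesgue"
    and phi_pos: "AE x in lebesgue. \<phi> x > 0"
    and a_meas: "\<And>i j. a i j \<in> borel_measurable lebesgue"
    and wd: "form_well_defined a \<phi>"
    and Phi_loc: "\<And>S. compact S \<Longrightarrow> S \<subseteq> - K \<Longrightarrow> set_integrable lebesgue S (\<lambda>x. \<Phi> (norm x))"
    and bound: "\<And>x. x \<notin> K \<Longrightarrow> matnorm a x * \<phi> x \<le> \<Phi> (norm x)"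
    and K_sub: "K \<subseteq> ball 0 \<rho>" and rho_pos: "0 < \<rho>"
    and R: "real R > \<rho>" and N: "N \<ge> R + 2" and L: "L > 0"
    and L_le: "ennreal L \<le> (\<integral>\<^sup>+ y. indicator (shell ((real R + 1)\<^sup>2) ((real N)\<^sup>2)) y *
       a_density \<Phi> CARD('n) (y::real^'n) \<partial>lebesgue)"
    and fin: "(\<integral>\<^sup>+ y. indicator (shell ((real R + 1)\<^sup>2) ((real N)\<^sup>2)) y *
       a_density \<Phi> CARD('n) (y::real^'n) \<partial>lebesgue) < \<infinity>"
  obtains u where "C0inf u" "\<And>x. 0 \<le> u x \<and> u x \<le> 1" "\<And>x. norm x \<le> real R \<Longrightarrow> u x = 1"
    "\<And>x. norm x \<ge> real N + 1 \<Longrightarrow> u x = 0"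
    "Eform a \<phi> u u \<le> 16 * (real CARD('n) * unit_ball_vol (real CARD('n)))\<^sup>2 / L"
proof -
  define cc where "cc = 4 / (real CARD('n) * unit_ball_vol (real CARD('n)))\<^sup>2"
  define \<alpha> where "\<alpha> = (real R)\<^sup>2"
  define \<beta> where "\<beta> = (real N + 1)\<^sup>2"
  have cc: "cc > 0" using d by (simp add: cc_def)
  have shells: "0 < \<alpha>" "\<alpha> < (real R + 1)\<^sup>2" "(real R + 1)\<^sup>2 \<le> (real N)\<^sup>2" "(real N)\<^sup>2 < \<beta>"
    unfolding \<alpha>_def \<beta>_def using R rho_pos N by (auto intro!: power_strict_mono power_mono)
  have "K \<subseteq> ball 0 (real R)" using K_sub R by auto
  then have shell_K: "shell \<alpha> \<beta> \<inter> K = {}"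
    using shell_disjoint_ball[of "real R" \<alpha> \<beta>] by (auto simp: \<alpha>_def)
  have Phi_int: "set_integrable lebesgue (shell \<alpha> \<beta>) (\<lambda>x::real^'n. \<Phi> (norm x))"
    using shell_K by (intro Phi_loc compact_shell) auto
  obtain \<psi> where \<psi>_smooth: "smooth_real \<psi>" and \<psi>_nonneg: "\<And>s. 0 \<le> \<psi> s"
    and \<psi>_below: "\<And>s. s \<le> \<alpha> \<Longrightarrow> \<psi> s = 0" and \<psi>_above: "\<And>s. \<beta> \<le> s \<Longrightarrow> \<psi> s = 0"
    and c_gt: "cc * L / 4 < integral {\<alpha>-1..\<beta>} \<psi>"
    and energy: "(\<integral>x. indicator (shell \<alpha> \<beta>) x * \<Phi> (norm (x::real^'n)) * ((\<psi> (x \<bullet> x))\<^sup>2 * (x \<bullet> x)) \<partial>lebesgue)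
       < 4 * integral {\<alpha>-1..\<beta>} \<psi>"
    unfolding cc_def by (rule exists_smooth_profile[OF d shells L Phi_int L_le fin]) blast
  define c where "c = integral {\<alpha>-1..\<beta>} \<psi>"
  have c: "0 < cc * L / 4" "cc * L / 4 < c" using cc L c_gt by (simp_all add: c_def)
  then have c_pos: "integral {\<alpha>-1..\<beta>} \<psi> > 0" by (simp add: c_def)
  note cutoff_facts = \<psi>_smooth \<psi>_nonneg \<psi>_below \<psi>_above c_pos
  define u where "u = (radial_cutoff \<psi> \<alpha> \<beta> :: real^'n \<Rightarrow> real)"
  have "Eform a \<phi> u u \<le> 4 / c\<^sup>2 * (\<integral>x. indicator (shell \<alpha> \<beta>) x * \<Phi> (norm (x::real^'n)) * ((\<psi> (x \<bullet> x))\<^sup>2 * (x \<bullet> x)) \<partial>lebesgue)"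
    unfolding u_def c_def
    by (rule Eform_radial_cutoff_le[OF cutoff_facts phi_meas phi_pos a_meas wd Phi_loc bound shell_K])
  also have "\<dots> \<le> 4 / c\<^sup>2 * (4 * c)"
    using energy by (intro mult_left_mono) (auto simp: c_def)
  also have "\<dots> = 16 / c" using c by (simp add: power2_eq_square field_simps)
  also have "\<dots> \<le> 16 / (cc * L / 4)" using c by (intro divide_left_mono) auto
  also have "\<dots> = 16 * (real CARD('n) * unit_ball_vol (real CARD('n)))\<^sup>2 / L"
    using d L by (simp add: cc_def field_simps)
  finally have "Eform a \<phi> u u \<le> 16 * (real CARD('n) * unit_ball_vol (real CARD('n)))\<^sup>2 / L" .
  moreover have "norm x \<le> real R \<Longrightarrow> u x = 1" for x
    using norm_le_iff_inner[of "real R" x] radial_cutoff_eq_1[OF cutoff_facts] by (simp add: u_def \<alpha>_def)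
  moreover have "norm x \<ge> real N + 1 \<Longrightarrow> u x = 0" for x
    using norm_ge_iff_inner[of "real N + 1" x] radial_cutoff_eq_0[OF cutoff_facts] by (simp add: u_def \<beta>_def)
  ultimately show ?thesis
    using that C0inf_radial_cutoff[OF cutoff_facts] radial_cutoff_nonneg[OF cutoff_facts]
      radial_cutoff_le_1[OF cutoff_facts] unfolding u_def by blast
qed

section \<open>Recurrence\<close>

lemma borel_measurable_of_locally_integrable:
  fixes \<phi> :: "'a::euclidean_space \<Rightarrow> real"
  assumes "\<And>S. compact S \<Longrightarrow> set_integrable lebesgue S \<phi>"
  shows "\<phi> \<in> borel_measurable lebesgue"
proof (rule borel_measurable_LIMSEQ_real)
  show "(\<lambda>x. indicator (cball 0 (real n)) x * \<phi> x) \<in> borel_measurable lebesgue" for n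
    using assms[of "cball 0 (real n)"] unfolding set_integrable_def
    by (auto dest: borel_measurable_integrable)
  fix x :: 'a
  obtain n0 :: nat where "norm x \<le> real n0" using real_arch_simple by blast
  then have "\<forall>n\<ge>n0. indicator (cball 0 (real n)) x * \<phi> x = \<phi> x"
    by (auto simp: dist_norm intro: order_trans)
  then have "eventually (\<lambda>n. indicator (cball 0 (real n)) x * \<phi> x = \<phi> x) sequentially"
    unfolding eventually_sequentially by blast
  then show "(\<lambda>n. indicator (cball 0 (real n)) x * \<phi> x) \<longlonglongrightarrow> \<phi> x"
    by (rule tendsto_eventually)
qed

lemma Eform_zero: "Eform a \<phi> (\<lambda>x::real^'n::finite. 0) (\<lambda>x. 0) = 0"
proof -
  have "pd i (\<lambda>x::real^'n. 0) x = 0" for i x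
    using frechet_derivative_at[OF has_derivative_const[of 0 "at x"]] by (simp add: pd_def)
  then show ?thesis unfolding Eform_def by simp
qed

text \<open>A test function is its own approximating sequence, so it lies in the domain of the closure
  with its own energy.\<close>

lemma closure_graph_C0inf:
  fixes a :: "'n::finite \<Rightarrow> 'n \<Rightarrow> real^'n \<Rightarrow> real" and \<phi> u :: "real^'n \<Rightarrow> real"
  assumes phi_loc: "\<And>S. compact S \<Longrightarrow> set_integrable lebesgue S \<phi>"
    and u: "C0inf u" and u_bounds: "\<And>x. 0 \<le> u x \<and> u x \<le> 1" and u_support: "\<And>x. norm x \<ge> r \<Longrightarrow> u x = 0"
  shows "closure_graph a \<phi> u (Eform a \<phi> u u)"
  unfolding closure_graph_def
proof (intro conjI)
  show u_meas: "u \<in> borel_measurable lebesgue"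
    using borel_measurable_iter_pd_C0inf[OF u, of "[]"] by simp
  let ?C = "cball (0::real^'n) r"
  have phi_meas [measurable]: "\<phi> \<in> borel_measurable lebesgue"
    by (rule borel_measurable_of_locally_integrable[OF phi_loc])
  have "integrable lebesgue (\<lambda>x. indicator ?C x *\<^sub>R \<phi> x)"
    using phi_loc[of ?C] unfolding set_integrable_def by simp
  then have fin: "(\<integral>\<^sup>+ x. ennreal (norm (indicator ?C x *\<^sub>R \<phi> x)) \<partial>lebesgue) < \<infinity>"
    by (simp add: integrable_iff_bounded)
  have "(\<integral>\<^sup>+ x. ennreal ((u x)\<^sup>2) \<partial>wmeasure \<phi>) = (\<integral>\<^sup>+ x. ennreal (\<phi> x) * ennreal ((u x)\<^sup>2) \<partial>lebesgue)"
    unfolding wmeasure_def using u_meas by (subst nn_integral_density) auto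
  also have "\<dots> \<le> (\<integral>\<^sup>+ x. ennreal (norm (indicator ?C x *\<^sub>R \<phi> x)) \<partial>lebesgue)"
  proof (rule nn_integral_mono)
    fix x
    have "(u x)\<^sup>2 \<le> 1" using u_bounds[of x] by (simp add: power_le_one)
    then have "ennreal (\<phi> x) * ennreal ((u x)\<^sup>2) \<le> ennreal (\<phi> x)"
      using mult_left_mono[of "ennreal ((u x)\<^sup>2)" 1 "ennreal (\<phi> x)"] by (simp add: ennreal_leI)
    then show "ennreal (\<phi> x) * ennreal ((u x)\<^sup>2) \<le> ennreal (norm (indicator ?C x *\<^sub>R \<phi> x))"
      using u_support[of x] by (cases "x \<in> ?C") (auto simp: dist_norm intro: order_trans ennreal_leI)
  qed
  finally show "(\<integral>\<^sup>+ x. ennreal ((u x)\<^sup>2) \<partial>wmeasure \<phi>) < \<infinity>" using fin by simp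
  show "\<exists>f. (\<forall>k. C0inf (f k)) \<and> L2_conv (wmeasure \<phi>) f u \<and> E_cauchy a \<phi> f \<and>
      (\<lambda>k. Eform a \<phi> (f k) (f k)) \<longlonglongrightarrow> Eform a \<phi> u u"
    using u by (intro exI[of _ "\<lambda>_. u"]) (simp add: L2_conv_def E_cauchy_def Eform_zero)
qed

lemma closure_recurrentI:
  fixes a :: "'n::finite \<Rightarrow> 'n \<Rightarrow> real^'n \<Rightarrow> real" and \<phi> :: "real^'n \<Rightarrow> real"
    and u :: "nat \<Rightarrow> real^'n \<Rightarrow> real" and radius :: "nat \<Rightarrow> nat"
  assumes phi_loc: "\<And>S. compact S \<Longrightarrow> set_integrable lebesgue S \<phi>"
    and pos: "form_positive a \<phi>"
    and radius: "\<And>k. radius k \<ge> k"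
    and u_C0inf: "\<And>k. C0inf (u k)" and u_bounds: "\<And>k x. 0 \<le> u k x \<and> u k x \<le> 1"
    and u_inside: "\<And>k x. norm x \<le> real (radius k) \<Longrightarrow> u k x = 1"
    and u_outside: "\<And>k x. norm x \<ge> real (radius (Suc k)) \<Longrightarrow> u k x = 0"
    and u_energy: "\<And>k. Eform a \<phi> (u k) (u k) \<le> 1 / (real k + 1)"
  shows "closure_recurrent a \<phi>"
  unfolding closure_recurrent_def
proof (intro exI[of _ u] exI[of _ "\<lambda>k. Eform a \<phi> (u k) (u k)"] conjI allI)
  show "closure_graph a \<phi> (u n) (Eform a \<phi> (u n) (u n))" for n
    by (rule closure_graph_C0inf[OF phi_loc u_C0inf u_bounds u_outside])
  show "AE x in lebesgue. 0 \<le> u n x \<and> u n x \<le> 1" for n using u_bounds by simp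
  show "AE x in lebesgue. incseq (\<lambda>n. u n x) \<and> (\<lambda>n. u n x) \<longlonglongrightarrow> 1"
  proof (rule AE_I2, rule conjI)
    fix x :: "real^'n"
    show "incseq (\<lambda>n. u n x)"
    proof (rule incseq_SucI)
      fix n
      show "u n x \<le> u (Suc n) x"
        using u_bounds[of n x] u_bounds[of "Suc n" x] u_inside[where k="Suc n" and x=x] u_outside[where k=n and x=x]
        by (cases "norm x \<le> real (radius (Suc n))") auto
    qed
    obtain n0 :: nat where n0: "norm x \<le> real n0" using real_arch_simple by blast
    have "u n x = 1" if "n \<ge> n0" for n
    proof (rule u_inside)
      have "real n0 \<le> real (radius n)" using radius[of n] that by simp
      then show "norm x \<le> real (radius n)" using n0 by linarith
    qed
    then have "eventually (\<lambda>n. u n x = 1) sequentially"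
      unfolding eventually_sequentially by blast
    then show "(\<lambda>n. u n x) \<longlonglongrightarrow> 1" by (rule tendsto_eventually)
  qed
  show "(\<lambda>k. Eform a \<phi> (u k) (u k)) \<longlonglongrightarrow> 0"
  proof (rule tendsto_sandwich[of "\<lambda>_. 0" _ _ "\<lambda>k. 1 / (real k + 1)"])
    show "eventually (\<lambda>k. 0 \<le> Eform a \<phi> (u k) (u k)) sequentially"
      using pos u_C0inf unfolding form_positive_def by auto
    show "eventually (\<lambda>k. Eform a \<phi> (u k) (u k) \<le> 1 / (real k + 1)) sequentially"
      using u_energy by auto
    show "(\<lambda>k. 1 / (real k + 1)) \<longlonglongrightarrow> 0"
      using LIMSEQ_inverse_real_of_nat by (simp add: inverse_eq_divide add.commute)
  qed simp
qed

text \<open>The cutoffs are chained: each one is equal to \<open>1\<close> on the ball where the previous one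
  is supported, which makes the sequence increasing.\<close>

lemma closure_recurrentI_cutoffs:
  fixes a :: "'n::finite \<Rightarrow> 'n \<Rightarrow> real^'n \<Rightarrow> real" and \<phi> :: "real^'n \<Rightarrow> real" and R\<^sub>0 :: nat
  assumes phi_loc: "\<And>S. compact S \<Longrightarrow> set_integrable lebesgue S \<phi>"
    and pos: "form_positive a \<phi>"
    and cutoffs: "\<And>R e. R \<ge> R\<^sub>0 \<Longrightarrow> e > 0 \<Longrightarrow> \<exists>N u. N > R \<and> C0inf u \<and> (\<forall>x. 0 \<le> u x \<and> u x \<le> 1) \<and>
       (\<forall>x. norm x \<le> real R \<longrightarrow> u x = 1) \<and> (\<forall>x. norm x \<ge> real N \<longrightarrow> u x = 0) \<and> Eform a \<phi> u u \<le> e"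
  shows "closure_recurrent a \<phi>"
proof -
  obtain next_radius :: "nat \<Rightarrow> nat \<Rightarrow> nat" and cutoff :: "nat \<Rightarrow> nat \<Rightarrow> real^'n \<Rightarrow> real"
    where step: "\<And>R k. R \<ge> R\<^sub>0 \<Longrightarrow> next_radius R k > R \<and> C0inf (cutoff R k)
      \<and> (\<forall>x. 0 \<le> cutoff R k x \<and> cutoff R k x \<le> 1) \<and> (\<forall>x. norm x \<le> real R \<longrightarrow> cutoff R k x = 1)
      \<and> (\<forall>x. norm x \<ge> real (next_radius R k) \<longrightarrow> cutoff R k x = 0)
      \<and> Eform a \<phi> (cutoff R k) (cutoff R k) \<le> 1 / (real k + 1)"
    using cutoffs[of _ "1 / (real _ + 1)"] by (metis divide_pos_pos of_nat_0_le_iff zero_less_one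
        add_nonneg_pos)
  define radius where "radius = rec_nat R\<^sub>0 (\<lambda>k R. next_radius R k)"
  have radius_Suc: "radius (Suc k) = next_radius (radius k) k" for k
    by (simp add: radius_def)
  have radius_ge: "radius k \<ge> R\<^sub>0" and radius_less: "radius k < radius (Suc k)" for k
  proof (induction k)
    case 0
    show "radius 0 \<ge> R\<^sub>0" by (simp add: radius_def)
    then show "radius 0 < radius (Suc 0)" using step by (simp add: radius_Suc)
  next
    case (Suc k)
    show "radius (Suc k) \<ge> R\<^sub>0" using Suc.IH by simp
    then show "radius (Suc k) < radius (Suc (Suc k))" using step by (simp add: radius_Suc)
  qed
  have "radius k \<ge> k" for k
    by (induction k) (use radius_less in \<open>auto simp: Suc_le_eq intro: le_less_trans\<close>)
  then show ?thesis
    using step[OF radius_ge] by (intro closure_recurrentI[OF phi_loc pos, of radius "\<lambda>k. cutoff (radius k) k"])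
       (auto simp: radius_Suc)
qed

theorem theorem4p3:
  fixes a :: "'n::finite \<Rightarrow> 'n \<Rightarrow> real^'n \<Rightarrow> real"
    and \<phi> :: "real^'n \<Rightarrow> real"
    and \<Phi> :: "real \<Rightarrow> real"
    and K :: "(real^'n) set"
    and \<rho> :: real
  assumes dim: "CARD('n) \<ge> 2"
    and phi_loc: "\<And>S. compact S \<Longrightarrow> set_integrable lebesgue S \<phi>"
    and phi_pos: "AE x in lebesgue. \<phi> x > 0"
    and a_meas: "\<And>i j. a i j \<in> borel_measurable lebesgue"
    and a_sym: "\<And>i j x. a i j x = a j i x"
    and wd: "form_well_defined a \<phi>"
    and pos: "form_positive a \<phi>"
    and clos: "form_closable a \<phi>"
    and K_compact: "compact K"
    and Phi_loc: "\<And>S. compact S \<Longrightarrow> S \<subseteq> - K \<Longrightarrow> set_integrable lebesgue S (\<lambda>x. \<Phi> (norm x))"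
    and bound: "\<And>x. x \<notin> K \<Longrightarrow> matnorm a x * \<phi> x \<le> \<Phi> (norm x)"
    and rho_pos: "\<rho> > 0"
    and K_sub: "K \<subseteq> ball 0 \<rho>"
    and an_fin: "\<And>n. real n > \<rho> \<Longrightarrow> a_seq TYPE('n) \<Phi> \<rho> n < \<infinity>"
    and an_lim: "filterlim (a_seq TYPE('n) \<Phi> \<rho>) (nhds \<infinity>) sequentially"
  shows "closure_recurrent a \<phi>"
proof (rule closure_recurrentI_cutoffs[OF phi_loc pos])
  define D where "D = 16 * (real CARD('n) * unit_ball_vol (real CARD('n)))\<^sup>2"
  have D: "D > 0" using dim by (simp add: D_def)
  have phi_meas: "\<phi> \<in> borel_measurable lebesgue"
    by (rule borel_measurable_of_locally_integrable[OF phi_loc])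
  fix R :: nat and e :: real
  assume "R \<ge> nat \<lceil>\<rho>\<rceil> + 1" "e > 0"
  then have R: "real R > \<rho>" by linarith
  obtain N where N: "N \<ge> R + 2"
    "ennreal (D / e) \<le> (\<integral>\<^sup>+ y. indicator (shell ((real R + 1)\<^sup>2) ((real N)\<^sup>2)) y *
       a_density \<Phi> CARD('n) (y::real^'n) \<partial>lebesgue)"
    "(\<integral>\<^sup>+ y. indicator (shell ((real R + 1)\<^sup>2) ((real N)\<^sup>2)) y *
       a_density \<Phi> CARD('n) (y::real^'n) \<partial>lebesgue) < \<infinity>"
    by (rule a_seq_shell_ge[OF Phi_loc K_sub an_fin an_lim R])
  obtain u where "C0inf u" "\<And>x. 0 \<le> u x \<and> u x \<le> 1" "\<And>x. norm x \<le> real R \<Longrightarrow> u x = 1"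
    "\<And>x. norm x \<ge> real N + 1 \<Longrightarrow> u x = 0" "Eform a \<phi> u u \<le> D / (D / e)"
    by (rule small_energy_cutoff[OF dim phi_meas phi_pos a_meas wd Phi_loc bound K_sub rho_pos R
          N(1) _ N(2,3)]) (use D \<open>e > 0\<close> in \<open>auto simp: D_def\<close>)
  then show "\<exists>N u. N > R \<and> C0inf u \<and> (\<forall>x. 0 \<le> u x \<and> u x \<le> 1) \<and> (\<forall>x. norm x \<le> real R \<longrightarrow> u x = 1)
      \<and> (\<forall>x. norm x \<ge> real N \<longrightarrow> u x = 0) \<and> Eform a \<phi> u u \<le> e"
    using N(1) D \<open>e > 0\<close> by (intro exI[of _ "N + 1"] exI[of _ u]) auto
qed

end
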